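(* Let $T\in\mathcal B(\ell_2)$ be self-adjoint of norm one and let reals $c_1<c_2$ satisfy $c_1,c_2\in\sigma(T)$. Let $\mathcal E=(e_n)_{n\in\mathbb N}$ be an orthonormal basis of $\ell_2$. Then for every $\varepsilon>0$ there are a finite $F\subseteq\mathbb N$ and a projection $P\in\mathcal B(\ell_2)$ such that $$\|[P_FTP_F,P]\|>\frac{c_2-c_1}{2}-\varepsilon$$ and, for all $n,m\in\mathbb N$, $\langle P(e_n),e_m\rangle\neq0$ implies $n,m\in F$, where $P_F$ is the orthogonal projection onto $\mathrm{span}\{e_n:n\in F\}$.
   Context: $\sigma(T)$ is the spectrum of $T$ and $[S,T]=ST-TS$. *)

theory Defs
  imports "HOL-Analysis.Analysis"
begin

text \<open>The complex Hilbert space l2 = l2(N), realised concretely as square-summable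
  sequences nat => complex. Operators are functions on sequences; only their
  behaviour on l2 matters.\<close>

type_synonym seq = "nat \<Rightarrow> complex"
type_synonym op = "seq \<Rightarrow> seq"

definition l2 :: "seq set" where
  "l2 = {x. summable (\<lambda>n. (cmod (x n))\<^sup>2)}"

definition l2_inner :: "seq \<Rightarrow> seq \<Rightarrow> complex" where
  "l2_inner x y = (\<Sum>n. x n * cnj (y n))"

definition l2_norm :: "seq \<Rightarrow> real" where
  "l2_norm x = sqrt (\<Sum>n. (cmod (x n))\<^sup>2)"

definition bounded_op :: "op \<Rightarrow> bool" where
  "bounded_op T \<longleftrightarrow>
     (\<forall>x\<in>l2. T x \<in> l2) \<and>
     (\<forall>x\<in>l2. \<forall>y\<in>l2. \<forall>a::complex. T (\<lambda>n. a * x n + y n) = (\<lambda>n. a * T x n + T y n)) \<and>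
     (\<exists>K. \<forall>x\<in>l2. l2_norm (T x) \<le> K * l2_norm x)"

definition op_norm :: "op \<Rightarrow> real" where
  "op_norm T = Sup {l2_norm (T x) | x. x \<in> l2 \<and> l2_norm x \<le> 1}"

definition self_adjoint :: "op \<Rightarrow> bool" where
  "self_adjoint T \<longleftrightarrow> bounded_op T \<and>
     (\<forall>x\<in>l2. \<forall>y\<in>l2. l2_inner (T x) y = l2_inner x (T y))"

definition is_projection :: "op \<Rightarrow> bool" where
  "is_projection P \<longleftrightarrow> self_adjoint P \<and> (\<forall>x\<in>l2. P (P x) = P x)"

definition invertible_op :: "op \<Rightarrow> bool" where
  "invertible_op T \<longleftrightarrow> bounded_op T \<and>
     (\<exists>S. bounded_op S \<and> (\<forall>x\<in>l2. S (T x) = x \<and> T (S x) = x))"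

definition op_spectrum :: "op \<Rightarrow> complex set" where
  "op_spectrum T = {z. \<not> invertible_op (\<lambda>x n. T x n - z * x n)}"

definition commutator :: "op \<Rightarrow> op \<Rightarrow> op" where
  "commutator S T = (\<lambda>x n. S (T x) n - T (S x) n)"

definition orthonormal_basis :: "(nat \<Rightarrow> seq) \<Rightarrow> bool" where
  "orthonormal_basis e \<longleftrightarrow>
     (\<forall>n. e n \<in> l2) \<and>
     (\<forall>n m. l2_inner (e n) (e m) = (if n = m then 1 else 0)) \<and>
     (\<forall>x\<in>l2. (\<forall>n. l2_inner x (e n) = 0) \<longrightarrow> x = (\<lambda>_. 0))"

definition span_proj :: "(nat \<Rightarrow> seq) \<Rightarrow> nat set \<Rightarrow> op" where
  "span_proj e F = (\<lambda>x k. \<Sum>n\<in>F. l2_inner x (e n) * e n k)"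

end

theory Submission
  imports Defs
begin

(*
  Since c1 and c2 lie in the spectrum of the self-adjoint operator T, both are approximate
  eigenvalues: otherwise T - c would be bounded below, and a bounded-below self-adjoint operator
  is invertible. Truncating approximate eigenvectors to finitely many coordinates of the basis
  gives nearly unit vectors z1, z2 in span {e n | n in F} that are still approximate eigenvectors;
  they are almost orthogonal because c1 ~= c2. Put u = (z1 + z2) / |z1 + z2|, y = z2 - z1 and let P be
  the projection onto u. For A = P_F T P_F we have <[A, P] u, y> = <T u, y> - <T u, u> <u, y>,
  which tends to (c2 - c1) / sqrt 2 while |y| tends to sqrt 2, so |[A, P]| > (c2 - c1) / 2 - eps.
  The matrix of P is supported on F since u lies in the span of the e n with n in F.
*)

section \<open>The sequence space l2\<close>

lemma l2_zero [simp]: "(\<lambda>n. 0) \<in> l2"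
  by (simp add: l2_def)

lemma summable_l2_norm_mult:
  assumes "x \<in> l2" "y \<in> l2"
  shows "summable (\<lambda>n. cmod (x n) * cmod (y n))"
proof (rule summable_comparison_test')
  show "summable (\<lambda>n. ((cmod (x n))\<^sup>2 + (cmod (y n))\<^sup>2) / 2)"
    using assms by (intro summable_divide summable_add) (auto simp: l2_def)
  show "norm (cmod (x n) * cmod (y n)) \<le> ((cmod (x n))\<^sup>2 + (cmod (y n))\<^sup>2) / 2" for n
    using sum_squares_bound[of "cmod (x n)" "cmod (y n)"] by simp
qed

lemma summable_l2_inner:
  assumes "x \<in> l2" "y \<in> l2"
  shows "summable (\<lambda>n. x n * cnj (y n))"
  by (rule summable_norm_cancel) (use summable_l2_norm_mult[OF assms] in \<open>simp add: norm_mult\<close>)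

lemma l2_add [simp, intro]:
  assumes "x \<in> l2" "y \<in> l2"
  shows "(\<lambda>n. x n + y n) \<in> l2"
proof -
  have "(cmod (x n + y n))\<^sup>2 \<le> 2 * (cmod (x n))\<^sup>2 + 2 * (cmod (y n))\<^sup>2" for n
  proof -
    have "(cmod (x n + y n))\<^sup>2 \<le> (cmod (x n) + cmod (y n))\<^sup>2"
      by (simp add: power_mono norm_triangle_ineq)
    also have "\<dots> \<le> 2 * (cmod (x n))\<^sup>2 + 2 * (cmod (y n))\<^sup>2"
      using sum_squares_bound[of "cmod (x n)" "cmod (y n)"] by (simp add: power2_sum)
    finally show ?thesis .
  qed
  moreover have "summable (\<lambda>n. 2 * (cmod (x n))\<^sup>2 + 2 * (cmod (y n))\<^sup>2)"
    using assms by (intro summable_add summable_mult) (auto simp: l2_def)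
  ultimately show ?thesis
    unfolding l2_def by (auto intro: summable_comparison_test')
qed

lemma l2_scale [simp, intro]: "x \<in> l2 \<Longrightarrow> (\<lambda>n. a * x n) \<in> l2"
  using summable_mult[of "\<lambda>n. (cmod (x n))\<^sup>2" "(cmod a)\<^sup>2"]
  by (simp add: l2_def norm_mult power_mult_distrib)

lemma l2_uminus [simp, intro]: "x \<in> l2 \<Longrightarrow> (\<lambda>n. - x n) \<in> l2"
  using l2_scale[of x "-1"] by simp

lemma l2_diff [simp, intro]: "x \<in> l2 \<Longrightarrow> y \<in> l2 \<Longrightarrow> (\<lambda>n. x n - y n) \<in> l2"
  using l2_add[of x "\<lambda>n. - y n"] by simp

lemma l2_sum [simp, intro]: "(\<And>i. i \<in> I \<Longrightarrow> f i \<in> l2) \<Longrightarrow> (\<lambda>n. \<Sum>i\<in>I. f i n) \<in> l2"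
proof (induction I rule: infinite_finite_induct)
  case (insert i I)
  then show ?case using l2_add[of "f i" "\<lambda>n. \<Sum>i\<in>I. f i n"] by simp
qed auto

lemma l2_inner_add_left:
  assumes "x \<in> l2" "y \<in> l2" "z \<in> l2"
  shows "l2_inner (\<lambda>n. x n + y n) z = l2_inner x z + l2_inner y z"
  unfolding l2_inner_def
  by (simp add: distrib_right suminf_add[OF summable_l2_inner[OF assms(1,3)] summable_l2_inner[OF assms(2,3)]])

lemma l2_inner_scale_left:
  assumes "x \<in> l2" "z \<in> l2"
  shows "l2_inner (\<lambda>n. a * x n) z = a * l2_inner x z"
  unfolding l2_inner_def
  using suminf_mult[OF summable_l2_inner[OF assms], of a] by (simp add: mult.assoc)

lemma l2_inner_commute:
  assumes "x \<in> l2" "y \<in> l2"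
  shows "l2_inner y x = cnj (l2_inner x y)"
proof -
  have "(\<lambda>n. cnj (x n * cnj (y n))) sums cnj (l2_inner x y)"
    unfolding l2_inner_def sums_cnj using summable_l2_inner[OF assms] by (rule summable_sums)
  then show ?thesis
    unfolding l2_inner_def by (simp add: sums_iff mult.commute)
qed

lemma l2_inner_add_right:
  assumes "x \<in> l2" "y \<in> l2" "z \<in> l2"
  shows "l2_inner z (\<lambda>n. x n + y n) = l2_inner z x + l2_inner z y"
  using assms by (simp add: l2_inner_commute[of _ z] l2_inner_add_left)

lemma l2_inner_scale_right:
  assumes "x \<in> l2" "z \<in> l2"
  shows "l2_inner z (\<lambda>n. a * x n) = cnj a * l2_inner z x"
  using assms by (simp add: l2_inner_commute[of _ z] l2_inner_scale_left)

lemma l2_inner_diff_left: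
  assumes "x \<in> l2" "y \<in> l2" "z \<in> l2"
  shows "l2_inner (\<lambda>n. x n - y n) z = l2_inner x z - l2_inner y z"
  using l2_inner_add_left[of x "\<lambda>n. - y n" z] l2_inner_scale_left[of y z "-1"] assms by simp

lemma l2_inner_diff_right:
  assumes "x \<in> l2" "y \<in> l2" "z \<in> l2"
  shows "l2_inner z (\<lambda>n. x n - y n) = l2_inner z x - l2_inner z y"
  using assms by (simp add: l2_inner_commute[of _ z] l2_inner_diff_left)

lemma l2_inner_sum_left:
  assumes "\<And>i. i \<in> I \<Longrightarrow> f i \<in> l2" "z \<in> l2"
  shows "l2_inner (\<lambda>n. \<Sum>i\<in>I. f i n) z = (\<Sum>i\<in>I. l2_inner (f i) z)"
  using assms(1)
proof (induction I rule: infinite_finite_induct)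
  case (insert i I)
  then show ?case
    using l2_inner_add_left[of "f i" "\<lambda>n. \<Sum>i\<in>I. f i n" z] assms(2) by simp
qed (simp_all add: l2_inner_def)

lemma l2_norm_power2: "x \<in> l2 \<Longrightarrow> (l2_norm x)\<^sup>2 = (\<Sum>n. (cmod (x n))\<^sup>2)"
  unfolding l2_norm_def l2_def by (simp add: suminf_nonneg)

lemma l2_norm_nonneg [simp]: "x \<in> l2 \<Longrightarrow> 0 \<le> l2_norm x"
  unfolding l2_norm_def l2_def by (simp add: suminf_nonneg)

lemma l2_norm_zero [simp]: "l2_norm (\<lambda>n. 0) = 0"
  by (simp add: l2_norm_def)

lemma l2_inner_self: "x \<in> l2 \<Longrightarrow> l2_inner x x = of_real ((l2_norm x)\<^sup>2)"
  unfolding l2_inner_def l2_norm_power2 complex_norm_square[symmetric]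
  by (simp add: l2_def suminf_of_real del: of_real_power)

lemma l2_norm_eq_0_iff: "x \<in> l2 \<Longrightarrow> l2_norm x = 0 \<longleftrightarrow> x = (\<lambda>n. 0)"
  unfolding l2_norm_def l2_def by (auto simp: suminf_eq_zero_iff fun_eq_iff)

lemma l2_norm_le_zero_imp_zero: "x \<in> l2 \<Longrightarrow> l2_norm x \<le> 0 \<Longrightarrow> x = (\<lambda>n. 0)"
  using l2_norm_nonneg[of x] l2_norm_eq_0_iff[of x] by linarith

lemma l2_norm_scale: "x \<in> l2 \<Longrightarrow> l2_norm (\<lambda>n. a * x n) = cmod a * l2_norm x"
  unfolding l2_norm_def l2_def
  by (simp add: norm_mult power_mult_distrib suminf_mult real_sqrt_mult)

lemma l2_norm_uminus: "x \<in> l2 \<Longrightarrow> l2_norm (\<lambda>n. - x n) = l2_norm x"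
  using l2_norm_scale[of x "-1"] by simp

lemma l2_norm_minus_commute:
  "x \<in> l2 \<Longrightarrow> y \<in> l2 \<Longrightarrow> l2_norm (\<lambda>n. x n - y n) = l2_norm (\<lambda>n. y n - x n)"
  using l2_norm_uminus[of "\<lambda>n. x n - y n"] by simp

lemma L2_set_le_l2_norm: "x \<in> l2 \<Longrightarrow> L2_set (\<lambda>n. cmod (x n)) A \<le> l2_norm x"
  unfolding L2_set_def l2_norm_def l2_def
  by (cases "finite A") (auto intro!: real_sqrt_le_mono sum_le_suminf simp: suminf_nonneg)

lemma l2_norm_coord_le: "x \<in> l2 \<Longrightarrow> cmod (x n) \<le> l2_norm x"
  using member_le_L2_set[of "{n}" n "\<lambda>n. cmod (x n)"] L2_set_le_l2_norm[of x "{n}"] by simp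

lemma l2_cauchy_schwarz:
  assumes "x \<in> l2" "y \<in> l2"
  shows "cmod (l2_inner x y) \<le> l2_norm x * l2_norm y"
proof -
  have bound: "cmod (\<Sum>n<N. x n * cnj (y n)) \<le> l2_norm x * l2_norm y" for N
  proof -
    have "cmod (\<Sum>n<N. x n * cnj (y n)) \<le> (\<Sum>n<N. \<bar>cmod (x n)\<bar> * \<bar>cmod (y n)\<bar>)"
      by (rule order_trans[OF norm_sum]) (simp add: norm_mult)
    also have "\<dots> \<le> L2_set (\<lambda>n. cmod (x n)) {..<N} * L2_set (\<lambda>n. cmod (y n)) {..<N}"
      by (rule L2_set_mult_ineq)
    also have "\<dots> \<le> l2_norm x * l2_norm y"
      using assms by (intro mult_mono L2_set_le_l2_norm) auto
    finally show ?thesis .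
  qed
  have "(\<lambda>N. cmod (\<Sum>n<N. x n * cnj (y n))) \<longlonglongrightarrow> cmod (l2_inner x y)"
    unfolding l2_inner_def by (intro tendsto_norm summable_LIMSEQ summable_l2_inner assms)
  then show ?thesis
    by (rule LIMSEQ_le_const2) (use bound in auto)
qed

lemma l2_norm_add_power2:
  assumes "x \<in> l2" "y \<in> l2"
  shows "(l2_norm (\<lambda>n. x n + y n))\<^sup>2 = (l2_norm x)\<^sup>2 + (l2_norm y)\<^sup>2 + 2 * Re (l2_inner x y)"
proof -
  have "(l2_norm (\<lambda>n. x n + y n))\<^sup>2 = Re (l2_inner (\<lambda>n. x n + y n) (\<lambda>n. x n + y n))"
    using l2_inner_self[of "\<lambda>n. x n + y n"] assms by simp
  also have "\<dots> = Re (l2_inner x x + l2_inner y y + (l2_inner x y + cnj (l2_inner x y)))"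
    using assms by (simp add: l2_inner_add_left l2_inner_add_right l2_inner_commute[of x y])
  also have "\<dots> = (l2_norm x)\<^sup>2 + (l2_norm y)\<^sup>2 + 2 * Re (l2_inner x y)"
    using assms by (simp add: l2_inner_self)
  finally show ?thesis .
qed

lemma l2_norm_add_le:
  assumes x: "x \<in> l2" and y: "y \<in> l2"
  shows "l2_norm (\<lambda>n. x n + y n) \<le> l2_norm x + l2_norm y"
proof -
  have "(l2_norm (\<lambda>n. x n + y n))\<^sup>2 \<le> (l2_norm x + l2_norm y)\<^sup>2"
    using l2_norm_add_power2[OF x y] l2_cauchy_schwarz[OF x y] complex_Re_le_cmod[of "l2_inner x y"]
    unfolding power2_sum by linarith
  then show ?thesis
    by (rule power2_le_imp_le) (use assms in simp)
qed

lemma l2_norm_diff_le: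
  "x \<in> l2 \<Longrightarrow> y \<in> l2 \<Longrightarrow> l2_norm (\<lambda>n. x n - y n) \<le> l2_norm x + l2_norm y"
  using l2_norm_add_le[of x "\<lambda>n. - y n"] l2_norm_uminus[of y] by simp

lemma l2_norm_diff_ge: "x \<in> l2 \<Longrightarrow> y \<in> l2 \<Longrightarrow> \<bar>l2_norm x - l2_norm y\<bar> \<le> l2_norm (\<lambda>n. x n - y n)"
  using l2_norm_add_le[of "\<lambda>n. x n - y n" y] l2_norm_add_le[of "\<lambda>n. y n - x n" x]
    l2_norm_minus_commute[of x y] by simp

lemma l2_norm_sum_le:
  "(\<And>i. i \<in> I \<Longrightarrow> f i \<in> l2) \<Longrightarrow> l2_norm (\<lambda>n. \<Sum>i\<in>I. f i n) \<le> (\<Sum>i\<in>I. l2_norm (f i))"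
proof (induction I rule: infinite_finite_induct)
  case (insert i I)
  then have "l2_norm (\<lambda>n. \<Sum>i\<in>insert i I. f i n) \<le> l2_norm (f i) + l2_norm (\<lambda>n. \<Sum>i\<in>I. f i n)"
    using l2_norm_add_le[of "f i" "\<lambda>n. \<Sum>i\<in>I. f i n"] by simp
  with insert show ?case by simp
qed auto

lemma l2_limit_unique:
  assumes X: "\<And>K. X K \<in> l2" and "x \<in> l2" "y \<in> l2"
    and "(\<lambda>K. l2_norm (\<lambda>n. X K n - x n)) \<longlonglongrightarrow> 0" "(\<lambda>K. l2_norm (\<lambda>n. X K n - y n)) \<longlonglongrightarrow> 0"
  shows "x = y"
proof -
  have "l2_norm (\<lambda>n. x n - y n) \<le> l2_norm (\<lambda>n. X K n - y n) + l2_norm (\<lambda>n. X K n - x n)" for K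
    using l2_norm_diff_le[of "\<lambda>n. X K n - y n" "\<lambda>n. X K n - x n"] X assms(2,3) by simp
  moreover have "(\<lambda>K. l2_norm (\<lambda>n. X K n - y n) + l2_norm (\<lambda>n. X K n - x n)) \<longlonglongrightarrow> 0 + 0"
    using assms(4,5) by (rule tendsto_add[rotated])
  ultimately have "l2_norm (\<lambda>n. x n - y n) \<le> 0"
    by (intro LIMSEQ_le_const) auto
  then have "(\<lambda>n. x n - y n) = (\<lambda>n. 0)"
    using assms(2,3) by (intro l2_norm_le_zero_imp_zero) simp_all
  then show ?thesis
    by (simp add: fun_eq_iff)
qed

section \<open>Completeness of l2\<close>

lemma l2_norm_le_of_coordinatewise_tendsto:
  assumes X: "\<And>j. X j \<in> l2" and lim: "\<And>n. (\<lambda>j. X j n) \<longlonglongrightarrow> x n"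
    and bound: "\<And>j. j \<ge> N \<Longrightarrow> l2_norm (X j) \<le> B" and "0 \<le> B"
  shows "x \<in> l2" and "l2_norm x \<le> B"
proof -
  have partial: "(\<Sum>n<M. (cmod (x n))\<^sup>2) \<le> B\<^sup>2" for M
  proof (rule LIMSEQ_le_const2)
    show "(\<lambda>j. \<Sum>n<M. (cmod (X j n))\<^sup>2) \<longlonglongrightarrow> (\<Sum>n<M. (cmod (x n))\<^sup>2)"
      by (intro tendsto_intros lim)
    have "(\<Sum>n<M. (cmod (X j n))\<^sup>2) \<le> B\<^sup>2" if "j \<ge> N" for j
    proof -
      have "(\<Sum>n<M. (cmod (X j n))\<^sup>2) = (L2_set (\<lambda>n. cmod (X j n)) {..<M})\<^sup>2"
        by (simp add: L2_set_def sum_nonneg)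
      also have "\<dots> \<le> B\<^sup>2"
        using L2_set_le_l2_norm[OF X, of j "{..<M}"] bound[OF that] by (intro power_mono) simp_all
      finally show ?thesis .
    qed
    then show "\<exists>N. \<forall>j\<ge>N. (\<Sum>n<M. (cmod (X j n))\<^sup>2) \<le> B\<^sup>2"
      by blast
  qed
  have "summable (\<lambda>n. (cmod (x n))\<^sup>2)"
    by (rule summableI_nonneg_bounded[OF _ partial]) simp
  then show x: "x \<in> l2"
    by (simp add: l2_def)
  have "(l2_norm x)\<^sup>2 \<le> B\<^sup>2"
    unfolding l2_norm_power2[OF x] using x by (intro suminf_le_const partial) (simp add: l2_def)
  then show "l2_norm x \<le> B"
    by (rule power2_le_imp_le) fact
qed

lemma Cauchy_l2_coordinate:
  assumes X: "\<And>k. X k \<in> l2"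
    and Cauchy: "\<And>\<epsilon>. \<epsilon> > 0 \<Longrightarrow> \<exists>N. \<forall>m\<ge>N. \<forall>k\<ge>m. l2_norm (\<lambda>n. X k n - X m n) < \<epsilon>"
  shows "Cauchy (\<lambda>k. X k n)"
  unfolding Cauchy_altdef dist_norm
proof (intro allI impI)
  fix \<epsilon> :: real assume "\<epsilon> > 0"
  then obtain N where N: "\<forall>m\<ge>N. \<forall>k\<ge>m. l2_norm (\<lambda>n. X k n - X m n) < \<epsilon>"
    using Cauchy by blast
  have "cmod (X m n - X k n) < \<epsilon>" if "m \<ge> N" "k > m" for m k
  proof -
    have "l2_norm (\<lambda>n. X k n - X m n) < \<epsilon>"
      using N that by simp
    then show ?thesis
      using l2_norm_coord_le[OF l2_diff[OF X[of k] X[of m]], of n] norm_minus_commute[of "X m n" "X k n"]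
      by linarith
  qed
  then show "\<exists>N. \<forall>m\<ge>N. \<forall>k>m. cmod (X m n - X k n) < \<epsilon>"
    by blast
qed

lemma l2_complete:
  assumes X: "\<And>k. X k \<in> l2"
    and Cauchy: "\<And>\<epsilon>. \<epsilon> > 0 \<Longrightarrow> \<exists>N. \<forall>m\<ge>N. \<forall>k\<ge>m. l2_norm (\<lambda>n. X k n - X m n) < \<epsilon>"
  obtains x where "x \<in> l2" and "(\<lambda>k. l2_norm (\<lambda>n. X k n - x n)) \<longlonglongrightarrow> 0"
proof -
  have "Cauchy (\<lambda>k. X k n)" for n
    using X Cauchy by (rule Cauchy_l2_coordinate)
  then have "\<forall>n. \<exists>l. (\<lambda>k. X k n) \<longlonglongrightarrow> l"
    by (simp add: Cauchy_convergent_iff convergent_def)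
  then obtain x where coord: "\<And>n. (\<lambda>k. X k n) \<longlonglongrightarrow> x n"
    by metis
  have close: "(\<lambda>n. x n - X k n) \<in> l2 \<and> l2_norm (\<lambda>n. x n - X k n) \<le> \<epsilon>"
    if N: "\<forall>m\<ge>N. \<forall>j\<ge>m. l2_norm (\<lambda>n. X j n - X m n) < \<epsilon>" and "k \<ge> N" "\<epsilon> > 0" for \<epsilon> N k
    using l2_norm_le_of_coordinatewise_tendsto[of "\<lambda>j n. X j n - X k n" "\<lambda>n. x n - X k n" k \<epsilon>]
      X coord N that by (force intro: tendsto_diff less_imp_le)
  obtain N1 where "\<forall>m\<ge>N1. \<forall>j\<ge>m. l2_norm (\<lambda>n. X j n - X m n) < 1"
    using Cauchy[of 1] by auto
  with close have "(\<lambda>n. x n - X N1 n) \<in> l2"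
    by simp
  from l2_add[OF this X[of N1]] have "x \<in> l2"
    by simp
  moreover have "(\<lambda>k. l2_norm (\<lambda>n. X k n - x n)) \<longlonglongrightarrow> 0"
  proof (rule LIMSEQ_I)
    fix r :: real assume "r > 0"
    then obtain N where N: "\<forall>m\<ge>N. \<forall>j\<ge>m. l2_norm (\<lambda>n. X j n - X m n) < r / 2"
      using Cauchy[of "r / 2"] by auto
    have "norm (l2_norm (\<lambda>n. X k n - x n) - 0) < r" if "k \<ge> N" for k
      using close[OF N that] \<open>r > 0\<close> \<open>x \<in> l2\<close> X l2_norm_minus_commute[of "X k" x] by simp
    then show "\<exists>N. \<forall>k\<ge>N. norm (l2_norm (\<lambda>n. X k n - x n) - 0) < r"
      by blast
  qed
  ultimately show ?thesis
    using that by blast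
qed

lemma l2_series:
  assumes y: "\<And>k. y k \<in> l2" and summable: "summable (\<lambda>k. l2_norm (y k))"
  defines "s \<equiv> \<lambda>n. \<Sum>k. y k n"
  shows "s \<in> l2" and "(\<lambda>K. l2_norm (\<lambda>n. (\<Sum>k<K. y k n) - s n)) \<longlonglongrightarrow> 0"
proof -
  define P where "P = (\<lambda>K n. \<Sum>k<K. y k n)"
  have P: "P K \<in> l2" for K
    unfolding P_def using y by (rule l2_sum)
  have "\<exists>N. \<forall>m\<ge>N. \<forall>k\<ge>m. l2_norm (\<lambda>n. P k n - P m n) < \<epsilon>" if "\<epsilon> > 0" for \<epsilon>
  proof -
    obtain N where N: "\<forall>m\<ge>N. \<forall>k. norm (\<Sum>i\<in>{m..<k}. l2_norm (y i)) < \<epsilon>"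
      using summable \<open>\<epsilon> > 0\<close> unfolding summable_Cauchy by blast
    have "l2_norm (\<lambda>n. P k n - P m n) < \<epsilon>" if "m \<ge> N" "k \<ge> m" for m k
    proof -
      have "P k n - P m n = (\<Sum>i\<in>{m..<k}. y i n)" for n
        using \<open>k \<ge> m\<close> sum_diff_nat_ivl[of 0 m k "\<lambda>i. y i n"] by (simp add: P_def atLeast0LessThan)
      then have "l2_norm (\<lambda>n. P k n - P m n) \<le> (\<Sum>i\<in>{m..<k}. l2_norm (y i))"
        using l2_norm_sum_le[of "{m..<k}" y] y by simp
      also have "\<dots> < \<epsilon>"
        using N \<open>m \<ge> N\<close> y by (auto simp: sum_nonneg)
      finally show ?thesis .
    qed
    then show ?thesis by blast
  qed
  then obtain x where x: "x \<in> l2" and lim: "(\<lambda>K. l2_norm (\<lambda>n. P K n - x n)) \<longlonglongrightarrow> 0"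
    by (rule l2_complete[OF P])
  have "x = s"
  proof
    fix n
    have "norm (P K n - x n) \<le> l2_norm (\<lambda>n. P K n - x n)" for K
      using l2_norm_coord_le[OF l2_diff[OF P x]] by simp
    then have "(\<lambda>K. P K n - x n) \<longlonglongrightarrow> 0"
      by (intro Lim_null_comparison[OF _ lim] always_eventually) blast
    then have "(\<lambda>K. P K n) \<longlonglongrightarrow> x n"
      by (simp add: LIM_zero_iff)
    moreover have "summable (\<lambda>k. y k n)"
      using summable_comparison_test'[OF summable l2_norm_coord_le[OF y]] by simp
    ultimately show "x n = s n"
      unfolding s_def P_def by (metis LIMSEQ_unique summable_LIMSEQ)
  qed
  with x lim show "s \<in> l2" and "(\<lambda>K. l2_norm (\<lambda>n. (\<Sum>k<K. y k n) - s n)) \<longlonglongrightarrow> 0"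
    by (simp_all add: P_def)
qed

section \<open>Bounded operators\<close>

lemma bounded_opI:
  assumes "\<And>x. x \<in> l2 \<Longrightarrow> T x \<in> l2"
    and "\<And>a x y. x \<in> l2 \<Longrightarrow> y \<in> l2 \<Longrightarrow> T (\<lambda>n. a * x n + y n) = (\<lambda>n. a * T x n + T y n)"
    and "\<And>x. x \<in> l2 \<Longrightarrow> l2_norm (T x) \<le> K * l2_norm x"
  shows "bounded_op T"
  using assms unfolding bounded_op_def by blast

lemma bounded_op_l2: "bounded_op T \<Longrightarrow> x \<in> l2 \<Longrightarrow> T x \<in> l2"
  by (simp add: bounded_op_def)

lemma bounded_op_linear:
  "bounded_op T \<Longrightarrow> x \<in> l2 \<Longrightarrow> y \<in> l2 \<Longrightarrow> T (\<lambda>n. a * x n + y n) = (\<lambda>n. a * T x n + T y n)"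
  by (simp add: bounded_op_def)

lemma bounded_op_zero: "bounded_op T \<Longrightarrow> T (\<lambda>n. 0) = (\<lambda>n. 0)"
  using bounded_op_linear[of T "\<lambda>n. 0" "\<lambda>n. 0" "-1"] by simp

lemma bounded_op_add:
  "bounded_op T \<Longrightarrow> x \<in> l2 \<Longrightarrow> y \<in> l2 \<Longrightarrow> T (\<lambda>n. x n + y n) = (\<lambda>n. T x n + T y n)"
  using bounded_op_linear[of T x y 1] by simp

lemma bounded_op_scale: "bounded_op T \<Longrightarrow> x \<in> l2 \<Longrightarrow> T (\<lambda>n. a * x n) = (\<lambda>n. a * T x n)"
  using bounded_op_linear[of T x "\<lambda>n. 0" a] bounded_op_zero[of T] by simp

lemma bounded_op_diff:
  "bounded_op T \<Longrightarrow> x \<in> l2 \<Longrightarrow> y \<in> l2 \<Longrightarrow> T (\<lambda>n. x n - y n) = (\<lambda>n. T x n - T y n)"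
  using bounded_op_linear[of T y x "-1"] by (simp add: algebra_simps)

lemma bounded_op_bound:
  assumes "bounded_op T"
  obtains K where "K > 0" and "\<And>x. x \<in> l2 \<Longrightarrow> l2_norm (T x) \<le> K * l2_norm x"
proof -
  obtain K where K: "\<forall>x\<in>l2. l2_norm (T x) \<le> K * l2_norm x"
    using assms by (auto simp: bounded_op_def)
  have "l2_norm (T x) \<le> max K 1 * l2_norm x" if "x \<in> l2" for x
    using K that mult_right_mono[OF max.cobounded1[of K 1] l2_norm_nonneg[OF that]] by force
  then show ?thesis
    using that[of "max K 1"] by simp
qed

lemma self_adjoint_bounded_op: "self_adjoint T \<Longrightarrow> bounded_op T"
  by (simp add: self_adjoint_def)

lemma self_adjoint_inner: "self_adjoint T \<Longrightarrow> x \<in> l2 \<Longrightarrow> y \<in> l2 \<Longrightarrow> l2_inner (T x) y = l2_inner x (T y)"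
  by (simp add: self_adjoint_def)

lemma bounded_op_id: "bounded_op (\<lambda>x. x)"
  by (rule bounded_opI[where K = 1]) auto

lemma bounded_op_comp:
  assumes S: "bounded_op S" and T: "bounded_op T"
  shows "bounded_op (\<lambda>x. S (T x))"
proof -
  obtain KS where KS: "KS > 0" "\<And>x. x \<in> l2 \<Longrightarrow> l2_norm (S x) \<le> KS * l2_norm x"
    using bounded_op_bound[OF S] by blast
  obtain KT where KT: "\<And>x. x \<in> l2 \<Longrightarrow> l2_norm (T x) \<le> KT * l2_norm x"
    using bounded_op_bound[OF T] by blast
  show ?thesis
  proof (rule bounded_opI[where K = "KS * KT"])
    fix x assume x: "x \<in> l2"
    have "l2_norm (S (T x)) \<le> KS * l2_norm (T x)"
      using KS(2) bounded_op_l2[OF T x] .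
    also have "\<dots> \<le> KS * (KT * l2_norm x)"
      using KT[OF x] KS(1) by simp
    finally show "l2_norm (S (T x)) \<le> KS * KT * l2_norm x"
      by (simp add: mult.assoc)
  qed (simp_all add: S T bounded_op_l2 bounded_op_linear)
qed

lemma bounded_op_scale_op: "bounded_op T \<Longrightarrow> bounded_op (\<lambda>x n. c * T x n)"
proof -
  assume T: "bounded_op T"
  then obtain K where K: "\<And>x. x \<in> l2 \<Longrightarrow> l2_norm (T x) \<le> K * l2_norm x"
    using bounded_op_bound by blast
  show ?thesis
  proof (rule bounded_opI[where K = "cmod c * K"])
    fix x assume "x \<in> l2"
    then show "l2_norm (\<lambda>n. c * T x n) \<le> cmod c * K * l2_norm x"
      using K[of x] by (simp add: T bounded_op_l2 l2_norm_scale mult.assoc mult_left_mono)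
  qed (simp_all add: T bounded_op_l2 bounded_op_linear, simp add: algebra_simps)
qed

lemma bounded_op_diff_op:
  assumes S: "bounded_op S" and T: "bounded_op T"
  shows "bounded_op (\<lambda>x n. S x n - T x n)"
proof -
  obtain KS where KS: "\<And>x. x \<in> l2 \<Longrightarrow> l2_norm (S x) \<le> KS * l2_norm x"
    using bounded_op_bound[OF S] by blast
  obtain KT where KT: "\<And>x. x \<in> l2 \<Longrightarrow> l2_norm (T x) \<le> KT * l2_norm x"
    using bounded_op_bound[OF T] by blast
  show ?thesis
  proof (rule bounded_opI[where K = "KS + KT"])
    fix x assume x: "x \<in> l2"
    have "l2_norm (\<lambda>n. S x n - T x n) \<le> l2_norm (S x) + l2_norm (T x)"
      by (rule l2_norm_diff_le) (simp_all add: S T x bounded_op_l2)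
    also have "\<dots> \<le> (KS + KT) * l2_norm x"
      using KS[OF x] KT[OF x] by (simp add: distrib_right)
    finally show "l2_norm (\<lambda>n. S x n - T x n) \<le> (KS + KT) * l2_norm x" .
  qed (simp_all add: S T bounded_op_l2 bounded_op_linear, simp add: algebra_simps)
qed

lemma l2_norm_le_op_norm:
  assumes C: "bounded_op C" and "x \<in> l2" "l2_norm x \<le> 1"
  shows "l2_norm (C x) \<le> op_norm C"
  unfolding op_norm_def
proof (rule cSup_upper)
  obtain K where "K > 0" and K: "\<And>x. x \<in> l2 \<Longrightarrow> l2_norm (C x) \<le> K * l2_norm x"
    using bounded_op_bound[OF C] by blast
  have "l2_norm (C x) \<le> K" if "x \<in> l2" "l2_norm x \<le> 1" for x
  proof -
    have "l2_norm (C x) \<le> K * l2_norm x"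
      using K that(1) .
    also have "\<dots> \<le> K * 1"
      using that(2) \<open>K > 0\<close> by (intro mult_left_mono) simp_all
    finally show ?thesis
      by simp
  qed
  then show "bdd_above {l2_norm (C x) | x. x \<in> l2 \<and> l2_norm x \<le> 1}"
    by (intro bdd_aboveI[where M = K]) blast
qed (use assms in blast)

lemma bounded_op_commutator:
  assumes "bounded_op S" "bounded_op T"
  shows "bounded_op (commutator S T)"
  unfolding commutator_def
  using bounded_op_diff_op[OF bounded_op_comp[OF assms] bounded_op_comp[OF assms(2,1)]] .

definition l2_normalize :: "seq \<Rightarrow> seq" where
  "l2_normalize x = (\<lambda>n. of_real (1 / l2_norm x) * x n)"

lemma l2_normalize_l2: "x \<in> l2 \<Longrightarrow> l2_normalize x \<in> l2"
  unfolding l2_normalize_def by (rule l2_scale)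

lemma l2_norm_l2_normalize: "x \<in> l2 \<Longrightarrow> l2_norm x \<noteq> 0 \<Longrightarrow> l2_norm (l2_normalize x) = 1"
  using l2_norm_scale[of x "of_real (1 / l2_norm x)"] l2_norm_nonneg[of x]
  by (simp add: l2_normalize_def norm_divide)

lemma bounded_op_l2_normalize:
  "bounded_op T \<Longrightarrow> x \<in> l2 \<Longrightarrow> T (l2_normalize x) = (\<lambda>n. of_real (1 / l2_norm x) * T x n)"
  unfolding l2_normalize_def by (rule bounded_op_scale)

lemma bounded_op_fixed_l2_normalize:
  "bounded_op T \<Longrightarrow> x \<in> l2 \<Longrightarrow> T x = x \<Longrightarrow> T (l2_normalize x) = l2_normalize x"
  using bounded_op_l2_normalize[of T x] by (simp add: l2_normalize_def)

definition rank_one_proj :: "seq \<Rightarrow> op" where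
  "rank_one_proj u = (\<lambda>v n. l2_inner v u * u n)"

lemma bounded_op_rank_one_proj:
  assumes u: "u \<in> l2" and "l2_norm u = 1"
  shows "bounded_op (rank_one_proj u)"
proof (rule bounded_opI[where K = 1])
  fix x assume "x \<in> l2"
  then show "rank_one_proj u x \<in> l2"
    unfolding rank_one_proj_def using u by (intro l2_scale)
  show "l2_norm (rank_one_proj u x) \<le> 1 * l2_norm x"
    using u \<open>x \<in> l2\<close> \<open>l2_norm u = 1\<close> l2_cauchy_schwarz[of x u] by (simp add: rank_one_proj_def l2_norm_scale)
qed (use u in \<open>simp add: rank_one_proj_def l2_inner_add_left l2_inner_scale_left algebra_simps\<close>)

lemma rank_one_proj_is_projection:
  assumes u: "u \<in> l2" and "l2_norm u = 1"
  shows "is_projection (rank_one_proj u)"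
proof -
  have "l2_inner (rank_one_proj u x) y = l2_inner x (rank_one_proj u y)" if "x \<in> l2" "y \<in> l2" for x y
    using u that
    by (simp add: rank_one_proj_def l2_inner_scale_left l2_inner_scale_right l2_inner_commute[of y u])
  moreover have "rank_one_proj u (rank_one_proj u x) = rank_one_proj u x" if "x \<in> l2" for x
    using u \<open>l2_norm u = 1\<close> that by (simp add: rank_one_proj_def l2_inner_scale_left l2_inner_self)
  ultimately show ?thesis
    using bounded_op_rank_one_proj[OF assms] by (simp add: is_projection_def self_adjoint_def)
qed

section \<open>Invertibility of bounded-below self-adjoint operators\<close>

lemma invertible_if_bounded_below_surj:
  assumes A: "bounded_op A" and "\<delta> > 0"
    and below: "\<And>x. x \<in> l2 \<Longrightarrow> \<delta> * l2_norm x \<le> l2_norm (A x)"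
    and surj: "\<And>b. b \<in> l2 \<Longrightarrow> \<exists>x\<in>l2. A x = b"
  shows "invertible_op A"
proof -
  have inj: "x = y" if "x \<in> l2" "y \<in> l2" "A x = A y" for x y
  proof -
    have "\<delta> * l2_norm (\<lambda>n. x n - y n) \<le> 0"
      using below[of "\<lambda>n. x n - y n"] bounded_op_diff[OF A that(1,2)] that by simp
    then have "(\<lambda>n. x n - y n) = (\<lambda>n. 0)"
      using \<open>\<delta> > 0\<close> that by (intro l2_norm_le_zero_imp_zero) (simp_all add: mult_le_0_iff)
    then show ?thesis
      by (simp add: fun_eq_iff)
  qed
  define S where "S b = (SOME x. x \<in> l2 \<and> A x = b)" for b
  have S: "S b \<in> l2" "A (S b) = b" if "b \<in> l2" for b
    unfolding S_def using someI_ex[OF surj[OF that, unfolded Bex_def]] by blast+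
  have "bounded_op S"
  proof (rule bounded_opI[where K = "1 / \<delta>"])
    fix x y a assume x: "x \<in> l2" and y: "y \<in> l2"
    have "A (\<lambda>n. a * S x n + S y n) = (\<lambda>n. a * x n + y n)"
      using bounded_op_linear[OF A S(1)[OF x] S(1)[OF y]] S(2)[OF x] S(2)[OF y] by simp
    then show "S (\<lambda>n. a * x n + y n) = (\<lambda>n. a * S x n + S y n)"
      by (intro inj[of "S (\<lambda>n. a * x n + y n)"]) (simp_all add: x y S)
  next
    fix x assume "x \<in> l2"
    then show "l2_norm (S x) \<le> 1 / \<delta> * l2_norm x"
      using below[of "S x"] S[of x] \<open>\<delta> > 0\<close> by (simp add: field_simps)
  qed (rule S)
  moreover have "S (A x) = x" if "x \<in> l2" for x
    using S[of "A x"] bounded_op_l2[OF A that] that by (intro inj[of "S (A x)"]) simp_all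
  ultimately show ?thesis
    unfolding invertible_op_def using A S by blast
qed

lemma bounded_op_funpow_l2: "bounded_op B \<Longrightarrow> b \<in> l2 \<Longrightarrow> (B ^^ k) b \<in> l2"
  by (induction k) (simp_all add: bounded_op_l2)

lemma funpow_contraction_le:
  assumes B: "bounded_op B" and "0 \<le> q"
    and contr: "\<And>x. x \<in> l2 \<Longrightarrow> l2_norm (B x) \<le> q * l2_norm x" and b: "b \<in> l2"
  shows "l2_norm ((B ^^ k) b) \<le> q ^ k * l2_norm b"
proof (induction k)
  case (Suc k)
  have "l2_norm ((B ^^ Suc k) b) \<le> q * l2_norm ((B ^^ k) b)"
    using contr[OF bounded_op_funpow_l2[OF B b, of k]] by simp
  also have "\<dots> \<le> q * (q ^ k * l2_norm b)"
    using Suc \<open>0 \<le> q\<close> by (rule mult_left_mono)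
  finally show ?case
    by (simp add: mult.assoc)
qed simp

lemma neumann_telescope:
  assumes B: "bounded_op B" and b: "b \<in> l2"
  shows "(\<lambda>n. (\<Sum>k<K. (B ^^ k) b n) - B (\<lambda>n. \<Sum>k<K. (B ^^ k) b n) n) = (\<lambda>n. b n - (B ^^ K) b n)"
proof (induction K)
  case 0
  then show ?case
    by (simp add: bounded_op_zero[OF B])
next
  case (Suc K)
  note l2 = bounded_op_funpow_l2[OF B b]
  have sum_l2: "(\<lambda>n. \<Sum>k<K. (B ^^ k) b n) \<in> l2"
    using l2 by simp
  have "B (\<lambda>n. \<Sum>k<Suc K. (B ^^ k) b n) = (\<lambda>n. B (\<lambda>n. \<Sum>k<K. (B ^^ k) b n) n + (B ^^ Suc K) b n)"
    using bounded_op_add[OF B sum_l2 l2[of K]] by simp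
  with Suc show ?case
    by (simp add: fun_eq_iff algebra_simps)
qed

lemma id_minus_contraction_surj:
  assumes B: "bounded_op B" and "0 \<le> q" "q < 1"
    and contr: "\<And>x. x \<in> l2 \<Longrightarrow> l2_norm (B x) \<le> q * l2_norm x" and b: "b \<in> l2"
  obtains r where "r \<in> l2" and "(\<lambda>n. r n - B r n) = b"
proof -
  define y where "y k = (B ^^ k) b" for k
  note y = bounded_op_funpow_l2[OF B b, folded y_def] funpow_contraction_le[OF B \<open>0 \<le> q\<close> contr b, folded y_def]
  have "summable (\<lambda>k. q ^ k * l2_norm b)"
    using \<open>0 \<le> q\<close> \<open>q < 1\<close> by (intro summable_mult2 summable_geometric) simp
  then have summable: "summable (\<lambda>k. l2_norm (y k))"
    by (rule summable_comparison_test') (use y in simp)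
  define P where "P K = (\<lambda>n. \<Sum>k<K. y k n)" for K
  define r where "r = (\<lambda>n. \<Sum>k. y k n)"
  have P: "P K \<in> l2" for K
    unfolding P_def using y(1) by (rule l2_sum)
  from l2_series[of y, OF y(1) summable]
  have r: "r \<in> l2" and lim: "(\<lambda>K. l2_norm (\<lambda>n. P K n - r n)) \<longlonglongrightarrow> 0"
    by (simp_all add: r_def P_def)
  define Q where "Q K = (\<lambda>n. P K n - B (P K) n)" for K
  have Q: "Q K \<in> l2" for K
    using P B by (simp add: Q_def bounded_op_l2)
  have "Q K = (\<lambda>n. b n - y K n)" for K
    unfolding Q_def P_def y_def by (rule neumann_telescope[OF B b])
  then have Q_b: "l2_norm (\<lambda>n. Q K n - b n) \<le> q ^ K * l2_norm b" for K
    using y(2)[of K] l2_norm_uminus[OF y(1)] by simp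
  have "(\<lambda>K. q ^ K * l2_norm b) \<longlonglongrightarrow> 0"
    using \<open>0 \<le> q\<close> \<open>q < 1\<close> by (intro tendsto_mult_left_zero LIMSEQ_power_zero) simp
  then have to_b: "(\<lambda>K. l2_norm (\<lambda>n. Q K n - b n)) \<longlonglongrightarrow> 0"
    by (rule Lim_null_comparison[OF always_eventually, rotated]) (use Q_b in \<open>simp add: Q b\<close>)
  have Q_r: "l2_norm (\<lambda>n. Q K n - (r n - B r n)) \<le> (1 + q) * l2_norm (\<lambda>n. P K n - r n)" for K
  proof -
    have "(\<lambda>n. Q K n - (r n - B r n)) = (\<lambda>n. (P K n - r n) - B (\<lambda>n. P K n - r n) n)"
      using bounded_op_diff[OF B P r] by (simp add: Q_def fun_eq_iff)
    then show ?thesis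
      using l2_norm_diff_le[of "\<lambda>n. P K n - r n" "B (\<lambda>n. P K n - r n)"] contr[of "\<lambda>n. P K n - r n"] P r
      by (simp add: B bounded_op_l2 distrib_right)
  qed
  have "(\<lambda>K. (1 + q) * l2_norm (\<lambda>n. P K n - r n)) \<longlonglongrightarrow> 0"
    using tendsto_mult_right_zero[OF lim] .
  then have to_r: "(\<lambda>K. l2_norm (\<lambda>n. Q K n - (r n - B r n))) \<longlonglongrightarrow> 0"
    by (rule Lim_null_comparison[OF always_eventually, rotated]) (use Q_r in \<open>simp add: Q r B bounded_op_l2\<close>)
  have "(\<lambda>n. r n - B r n) = b"
    by (rule l2_limit_unique[OF Q _ b to_r to_b]) (simp add: r B bounded_op_l2)
  with r that show ?thesis
    by blast
qed

lemma norm_id_minus_scaled_square_power2_le: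
  assumes sa: "self_adjoint A" and "M > 0" "0 \<le> \<delta>"
    and upper: "\<And>x. x \<in> l2 \<Longrightarrow> l2_norm (A x) \<le> M * l2_norm x"
    and below: "\<And>x. x \<in> l2 \<Longrightarrow> \<delta> * l2_norm x \<le> l2_norm (A x)"
    and r: "r \<in> l2"
  shows "(l2_norm (\<lambda>n. r n - of_real (1 / M\<^sup>2) * A (A r) n))\<^sup>2 \<le> (1 - \<delta>\<^sup>2 / M\<^sup>2) * (l2_norm r)\<^sup>2"
proof -
  define t where "t = 1 / M\<^sup>2"
  have "t > 0" "t * M\<^sup>2 = 1"
    using \<open>M > 0\<close> by (simp_all add: t_def)
  have A: "bounded_op A"
    using sa by (rule self_adjoint_bounded_op)
  have s: "A r \<in> l2" and w: "A (A r) \<in> l2"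
    using r by (simp_all add: A bounded_op_l2)
  define v where "v = (\<lambda>n. - (of_real t * A (A r) n))"
  have v: "v \<in> l2"
    using w by (simp add: v_def)
  have norm_v: "l2_norm v = t * l2_norm (A (A r))"
    using w \<open>t > 0\<close> by (simp add: v_def l2_norm_uminus l2_norm_scale)
  have "l2_inner r (A (A r)) = l2_inner (A r) (A r)"
    using self_adjoint_inner[OF sa r s] by simp
  then have inner: "Re (l2_inner r v) = - t * (l2_norm (A r))\<^sup>2"
    using l2_inner_scale_right[OF w r, of "- of_real t"] by (simp add: v_def l2_inner_self[OF s])
  have "(l2_norm (\<lambda>n. r n - of_real t * A (A r) n))\<^sup>2 = (l2_norm (\<lambda>n. r n + v n))\<^sup>2"
    by (simp add: v_def)
  also have "\<dots> = (l2_norm r)\<^sup>2 + (t * l2_norm (A (A r)))\<^sup>2 - 2 * t * (l2_norm (A r))\<^sup>2"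
    using l2_norm_add_power2[OF r v] norm_v inner by simp
  also have "(t * l2_norm (A (A r)))\<^sup>2 \<le> (t * (M * l2_norm (A r)))\<^sup>2"
    using upper[OF s] w \<open>t > 0\<close> by (intro power_mono mult_left_mono) simp_all
  also have "(t * (M * l2_norm (A r)))\<^sup>2 = t * (l2_norm (A r))\<^sup>2"
    using \<open>t * M\<^sup>2 = 1\<close> by (simp add: power2_eq_square algebra_simps)
  also have "(l2_norm r)\<^sup>2 + t * (l2_norm (A r))\<^sup>2 - 2 * t * (l2_norm (A r))\<^sup>2
      = (l2_norm r)\<^sup>2 - t * (l2_norm (A r))\<^sup>2"
    by simp
  also have "\<dots> \<le> (l2_norm r)\<^sup>2 - t * (\<delta> * l2_norm r)\<^sup>2"
    using below[OF r] r \<open>0 \<le> \<delta>\<close> \<open>t > 0\<close> by (simp add: power_mono)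
  also have "\<dots> = (1 - \<delta>\<^sup>2 / M\<^sup>2) * (l2_norm r)\<^sup>2"
    by (simp add: t_def power_mult_distrib algebra_simps)
  finally show ?thesis
    by (simp add: t_def)
qed

(* For M >= |A|, the operator I - A^2 / M^2 is a contraction, so A^2 and hence A is onto. *)
lemma self_adjoint_bounded_below_invertible:
  assumes sa: "self_adjoint A" and "\<delta> > 0"
    and below: "\<And>x. x \<in> l2 \<Longrightarrow> \<delta> * l2_norm x \<le> l2_norm (A x)"
  shows "invertible_op A"
proof -
  have A: "bounded_op A"
    using sa by (rule self_adjoint_bounded_op)
  obtain M0 where "M0 > 0" and M0: "\<And>x. x \<in> l2 \<Longrightarrow> l2_norm (A x) \<le> M0 * l2_norm x"
    using bounded_op_bound[OF A] by blast
  define M where "M = max M0 \<delta>"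
  have "M > 0" "\<delta> \<le> M"
    using \<open>\<delta> > 0\<close> by (simp_all add: M_def)
  have upper: "l2_norm (A x) \<le> M * l2_norm x" if "x \<in> l2" for x
    using M0[OF that] mult_right_mono[of M0 M "l2_norm x"] that by (simp add: M_def)
  define t where "t = 1 / M\<^sup>2"
  define B where "B r n = r n - of_real t * A (A r) n" for r n
  define q where "q = sqrt (1 - \<delta>\<^sup>2 / M\<^sup>2)"
  have "\<delta>\<^sup>2 / M\<^sup>2 \<le> 1" "0 < \<delta>\<^sup>2 / M\<^sup>2"
    using \<open>\<delta> > 0\<close> \<open>\<delta> \<le> M\<close> by (simp_all add: power_mono)
  then have "0 \<le> q" "q < 1"
    by (simp_all add: q_def)
  have B: "bounded_op B"
    unfolding B_def[abs_def]
    by (rule bounded_op_diff_op[OF bounded_op_id bounded_op_scale_op[OF bounded_op_comp[OF A A]]])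
  have contr: "l2_norm (B x) \<le> q * l2_norm x" if "x \<in> l2" for x
  proof (rule power2_le_imp_le)
    show "(l2_norm (B x))\<^sup>2 \<le> (q * l2_norm x)\<^sup>2"
      using norm_id_minus_scaled_square_power2_le[OF sa \<open>M > 0\<close> _ upper below that] \<open>\<delta> > 0\<close>
        \<open>\<delta>\<^sup>2 / M\<^sup>2 \<le> 1\<close> by (simp add: B_def[abs_def] t_def q_def power_mult_distrib)
  qed (simp add: \<open>0 \<le> q\<close> that)
  have "\<exists>x\<in>l2. A x = b" if b: "b \<in> l2" for b
  proof -
    obtain r where r: "r \<in> l2" and "(\<lambda>n. r n - B r n) = b"
      using id_minus_contraction_surj[OF B \<open>0 \<le> q\<close> \<open>q < 1\<close> contr b] by blast
    then have "A (\<lambda>n. of_real t * A r n) = b"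
      using bounded_op_scale[OF A bounded_op_l2[OF A r]] by (simp add: B_def fun_eq_iff)
    with r show ?thesis
      by (intro bexI[of _ "\<lambda>n. of_real t * A r n"]) (simp_all add: A bounded_op_l2)
  qed
  then show ?thesis
    using invertible_if_bounded_below_surj[OF A \<open>\<delta> > 0\<close> below] by blast
qed

section \<open>Approximate eigenvectors\<close>

lemma self_adjoint_minus_scalar:
  assumes T: "self_adjoint T"
  shows "self_adjoint (\<lambda>x n. T x n - complex_of_real c * x n)"
  unfolding self_adjoint_def
proof (intro conjI ballI)
  have "bounded_op T"
    using T by (rule self_adjoint_bounded_op)
  then show "bounded_op (\<lambda>x n. T x n - complex_of_real c * x n)"
    by (rule bounded_op_diff_op[OF _ bounded_op_scale_op[OF bounded_op_id]])
  fix x y assume "x \<in> l2" "y \<in> l2"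
  with T show "l2_inner (\<lambda>n. T x n - complex_of_real c * x n) y = l2_inner x (\<lambda>n. T y n - complex_of_real c * y n)"
    by (simp add: self_adjoint_def bounded_op_l2 l2_inner_diff_left l2_inner_diff_right
        l2_inner_scale_left l2_inner_scale_right)
qed

lemma bounded_below_if_unit:
  assumes A: "bounded_op A" and unit: "\<And>u. u \<in> l2 \<Longrightarrow> l2_norm u = 1 \<Longrightarrow> \<delta> \<le> l2_norm (A u)"
    and x: "x \<in> l2"
  shows "\<delta> * l2_norm x \<le> l2_norm (A x)"
proof (cases "l2_norm x = 0")
  case True
  then show ?thesis
    using x by (simp add: l2_norm_eq_0_iff bounded_op_zero[OF A])
next
  case False
  then have "l2_norm x > 0"
    using x l2_norm_nonneg[of x] by linarith
  have "\<delta> \<le> l2_norm (A (l2_normalize x))"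
    using unit x False by (simp add: l2_normalize_l2 l2_norm_l2_normalize)
  also have "\<dots> = l2_norm (A x) / l2_norm x"
    using x \<open>l2_norm x > 0\<close> l2_norm_scale[OF bounded_op_l2[OF A x], of "of_real (1 / l2_norm x)"]
    by (simp add: bounded_op_l2_normalize[OF A x] norm_divide)
  finally show ?thesis
    using \<open>l2_norm x > 0\<close> by (simp add: pos_le_divide_eq)
qed

lemma spectrum_approx_eigenvector:
  assumes T: "self_adjoint T" and c: "complex_of_real c \<in> op_spectrum T" and "\<delta> > 0"
  obtains x where "x \<in> l2" "l2_norm x = 1" "l2_norm (\<lambda>n. T x n - complex_of_real c * x n) < \<delta>"
proof (rule ccontr)
  assume "\<not> thesis"
  with that have far: "\<delta> \<le> l2_norm (\<lambda>n. T u n - complex_of_real c * u n)"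
    if "u \<in> l2" "l2_norm u = 1" for u
    using that by force
  define A where "A = (\<lambda>x n. T x n - complex_of_real c * x n)"
  have A: "self_adjoint A"
    unfolding A_def using T by (rule self_adjoint_minus_scalar)
  then have "bounded_op A"
    by (rule self_adjoint_bounded_op)
  then have "\<delta> * l2_norm x \<le> l2_norm (A x)" if "x \<in> l2" for x
    by (rule bounded_below_if_unit[OF _ _ that]) (use far in \<open>simp add: A_def\<close>)
  then have "invertible_op A"
    by (rule self_adjoint_bounded_below_invertible[OF A \<open>\<delta> > 0\<close>])
  with c show False
    by (simp add: op_spectrum_def A_def)
qed

definition approx_eigenseq :: "op \<Rightarrow> real \<Rightarrow> (nat \<Rightarrow> seq) \<Rightarrow> bool" where
  "approx_eigenseq T c Z \<longleftrightarrow> (\<forall>k. Z k \<in> l2) \<and> (\<lambda>k. l2_norm (Z k)) \<longlonglongrightarrow> 1 \<and>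
     (\<lambda>k. l2_norm (\<lambda>n. T (Z k) n - complex_of_real c * Z k n)) \<longlonglongrightarrow> 0"

lemma approx_eigenseq_l2: "approx_eigenseq T c Z \<Longrightarrow> Z k \<in> l2"
  by (simp add: approx_eigenseq_def)

lemma spectrum_approx_eigenseq:
  assumes "self_adjoint T" and "complex_of_real c \<in> op_spectrum T"
  obtains X where "approx_eigenseq T c X"
proof -
  have T: "bounded_op T"
    using assms(1) by (rule self_adjoint_bounded_op)
  have "\<forall>k. \<exists>x. x \<in> l2 \<and> l2_norm x = 1 \<and>
      l2_norm (\<lambda>n. T x n - complex_of_real c * x n) < inverse (real (Suc k))"
    by (metis spectrum_approx_eigenvector[OF assms] inverse_positive_iff_positive of_nat_0_less_iff zero_less_Suc)
  then obtain X where X: "\<And>k. X k \<in> l2" "\<And>k. l2_norm (X k) = 1"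
    and res: "\<And>k. l2_norm (\<lambda>n. T (X k) n - complex_of_real c * X k n) < inverse (real (Suc k))"
    by metis
  have "(\<lambda>k. l2_norm (\<lambda>n. T (X k) n - complex_of_real c * X k n)) \<longlonglongrightarrow> 0"
    by (rule Lim_null_comparison[OF always_eventually LIMSEQ_inverse_real_of_nat])
      (use res[THEN less_imp_le] in \<open>simp add: X(1) T bounded_op_l2\<close>)
  then show ?thesis
    by (intro that[of X]) (simp add: approx_eigenseq_def X)
qed

lemma approx_eigenseq_perturb:
  assumes T: "bounded_op T" and X: "approx_eigenseq T c X"
    and W: "\<And>k. W k \<in> l2" and close: "(\<lambda>k. l2_norm (\<lambda>n. W k n - X k n)) \<longlonglongrightarrow> 0"
  shows "approx_eigenseq T c W"
proof -
  have Xl2: "X k \<in> l2" for k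
    using X by (rule approx_eigenseq_l2)
  obtain K where K: "\<And>x. x \<in> l2 \<Longrightarrow> l2_norm (T x) \<le> K * l2_norm x"
    using bounded_op_bound[OF T] by blast
  define d where "d k = (\<lambda>n. W k n - X k n)" for k
  define res where "res Z = (\<lambda>k::nat. l2_norm (\<lambda>n. T (Z k) n - complex_of_real c * Z k n))" for Z
  have d: "d k \<in> l2" for k
    using W Xl2 by (simp add: d_def)
  have "(\<lambda>k. l2_norm (W k) - l2_norm (X k)) \<longlonglongrightarrow> 0"
    by (rule Lim_null_comparison[OF always_eventually close]) (simp add: W Xl2 l2_norm_diff_ge)
  then have norm_W: "(\<lambda>k. (l2_norm (W k) - l2_norm (X k)) + l2_norm (X k)) \<longlonglongrightarrow> 0 + 1"
    using X by (intro tendsto_add) (simp_all add: approx_eigenseq_def)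
  have res_le: "res W k \<le> res X k + (K + \<bar>c\<bar>) * l2_norm (d k)" for k
  proof -
    have "(\<lambda>n. T (W k) n - complex_of_real c * W k n)
        = (\<lambda>n. (T (X k) n - complex_of_real c * X k n) + (T (d k) n - complex_of_real c * d k n))"
      using bounded_op_diff[OF T W Xl2, of k k] by (simp add: d_def fun_eq_iff algebra_simps)
    then have "res W k
        = l2_norm (\<lambda>n. (T (X k) n - complex_of_real c * X k n) + (T (d k) n - complex_of_real c * d k n))"
      by (simp add: res_def)
    also have "\<dots> \<le> res X k + (l2_norm (T (d k)) + l2_norm (\<lambda>n. complex_of_real c * d k n))"
      using l2_norm_add_le[of "\<lambda>n. T (X k) n - complex_of_real c * X k n" "\<lambda>n. T (d k) n - complex_of_real c * d k n"]
        l2_norm_diff_le[of "T (d k)" "\<lambda>n. complex_of_real c * d k n"] d Xl2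
      by (simp add: res_def T bounded_op_l2)
    also have "\<dots> \<le> res X k + (K + \<bar>c\<bar>) * l2_norm (d k)"
      using K[OF d] d by (simp add: l2_norm_scale distrib_right)
    finally show ?thesis .
  qed
  have "(\<lambda>k. res X k + (K + \<bar>c\<bar>) * l2_norm (d k)) \<longlonglongrightarrow> 0 + (K + \<bar>c\<bar>) * 0"
    using X close by (intro tendsto_intros) (simp_all add: approx_eigenseq_def d_def res_def)
  then have "(\<lambda>k. res X k + (K + \<bar>c\<bar>) * l2_norm (d k)) \<longlonglongrightarrow> 0"
    by simp
  then have "res W \<longlonglongrightarrow> 0"
    by (rule Lim_null_comparison[OF always_eventually, rotated]) (use res_le in \<open>simp add: res_def W T bounded_op_l2\<close>)
  with norm_W show ?thesis
    by (simp add: approx_eigenseq_def W res_def)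
qed

lemma tendsto_l2_inner_zero:
  assumes "\<And>k. R k \<in> l2" "\<And>k. W k \<in> l2"
    and "(\<lambda>k. l2_norm (R k)) \<longlonglongrightarrow> 0" "(\<lambda>k. l2_norm (W k)) \<longlonglongrightarrow> L"
  shows "(\<lambda>k. l2_inner (R k) (W k)) \<longlonglongrightarrow> 0"
proof (rule Lim_null_comparison[OF always_eventually])
  show "\<forall>k. norm (l2_inner (R k) (W k)) \<le> l2_norm (R k) * l2_norm (W k)"
    using assms by (simp add: l2_cauchy_schwarz)
  show "(\<lambda>k. l2_norm (R k) * l2_norm (W k)) \<longlonglongrightarrow> 0"
    using tendsto_mult[OF assms(3,4)] by simp
qed

lemma tendsto_l2_norm_of_inner_self:
  assumes "\<And>k. W k \<in> l2" and "(\<lambda>k. l2_inner (W k) (W k)) \<longlonglongrightarrow> of_real a"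
  shows "(\<lambda>k. l2_norm (W k)) \<longlonglongrightarrow> sqrt a"
proof -
  have "(\<lambda>k. sqrt (Re (l2_inner (W k) (W k)))) \<longlonglongrightarrow> sqrt (Re (of_real a))"
    by (intro tendsto_intros assms(2))
  then show ?thesis
    using assms(1) by (simp add: l2_inner_self)
qed

lemma approx_eigenseq_inner_self:
  assumes "approx_eigenseq T c Z"
  shows "(\<lambda>k. l2_inner (Z k) (Z k)) \<longlonglongrightarrow> 1"
proof -
  have "(\<lambda>k. complex_of_real ((l2_norm (Z k))\<^sup>2)) \<longlonglongrightarrow> of_real (1\<^sup>2)"
    using assms by (intro tendsto_intros) (simp add: approx_eigenseq_def)
  then show ?thesis
    using assms by (simp add: l2_inner_self approx_eigenseq_l2)
qed

lemma approx_eigenseq_inner_apply: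
  assumes T: "bounded_op T" and Z: "approx_eigenseq T c Z"
    and W: "\<And>k. W k \<in> l2" "(\<lambda>k. l2_norm (W k)) \<longlonglongrightarrow> L"
    and lim: "(\<lambda>k. l2_inner (Z k) (W k)) \<longlonglongrightarrow> g"
  shows "(\<lambda>k. l2_inner (T (Z k)) (W k)) \<longlonglongrightarrow> of_real c * g"
proof -
  define R where "R k = (\<lambda>n. T (Z k) n - complex_of_real c * Z k n)" for k
  have R: "R k \<in> l2" for k
    using Z T by (simp add: R_def approx_eigenseq_l2 bounded_op_l2)
  have "(\<lambda>k. l2_inner (R k) (W k) + of_real c * l2_inner (Z k) (W k)) \<longlonglongrightarrow> 0 + of_real c * g"
    using Z W lim
    by (intro tendsto_intros tendsto_l2_inner_zero[OF R W(1) _ W(2)]) (simp_all add: R_def approx_eigenseq_def)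
  moreover have "l2_inner (T (Z k)) (W k) = l2_inner (R k) (W k) + of_real c * l2_inner (Z k) (W k)" for k
    using Z T W by (simp add: R_def approx_eigenseq_l2 bounded_op_l2 l2_inner_diff_left l2_inner_scale_left)
  ultimately show ?thesis
    by simp
qed

lemma approx_eigenseq_orthogonal:
  assumes T: "self_adjoint T" and "c1 \<noteq> c2"
    and Z1: "approx_eigenseq T c1 Z1" and Z2: "approx_eigenseq T c2 Z2"
  shows "(\<lambda>k. l2_inner (Z1 k) (Z2 k)) \<longlonglongrightarrow> 0"
proof -
  define R1 where "R1 k = (\<lambda>n. T (Z1 k) n - complex_of_real c1 * Z1 k n)" for k
  define R2 where "R2 k = (\<lambda>n. T (Z2 k) n - complex_of_real c2 * Z2 k n)" for k
  have B: "bounded_op T"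
    using T by (rule self_adjoint_bounded_op)
  have l2: "Z1 k \<in> l2" "Z2 k \<in> l2" "R1 k \<in> l2" "R2 k \<in> l2" for k
    using Z1 Z2 B by (simp_all add: R1_def R2_def approx_eigenseq_l2 bounded_op_l2)
  have "(\<lambda>k. (l2_inner (R1 k) (Z2 k) - cnj (l2_inner (R2 k) (Z1 k))) / of_real (c2 - c1))
      \<longlonglongrightarrow> (0 - cnj 0) / of_real (c2 - c1)"
    using Z1 Z2 \<open>c1 \<noteq> c2\<close>
    by (intro tendsto_intros tendsto_l2_inner_zero[OF l2(3,2), where L = 1]
        tendsto_l2_inner_zero[OF l2(4,1), where L = 1])
      (simp_all add: approx_eigenseq_def R1_def R2_def)
  moreover have "l2_inner (Z1 k) (Z2 k) = (l2_inner (R1 k) (Z2 k) - cnj (l2_inner (R2 k) (Z1 k))) / of_real (c2 - c1)"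
    for k
  proof -
    have "l2_inner (T (Z1 k)) (Z2 k) = l2_inner (Z1 k) (T (Z2 k))"
      using T l2 by (simp add: self_adjoint_inner)
    then have "l2_inner (R1 k) (Z2 k) + of_real c1 * l2_inner (Z1 k) (Z2 k)
        = cnj (l2_inner (R2 k) (Z1 k)) + of_real c2 * l2_inner (Z1 k) (Z2 k)"
      using l2 B by (simp add: R1_def R2_def bounded_op_l2 l2_inner_diff_left l2_inner_diff_right
          l2_inner_scale_left l2_inner_scale_right l2_inner_commute[of _ "Z1 k"])
    then show ?thesis
      using \<open>c1 \<noteq> c2\<close> by (simp add: field_simps)
  qed
  ultimately show ?thesis
    by simp
qed

lemma approx_eigenseq_gram_limits:
  assumes T: "self_adjoint T" and "c1 \<noteq> c2"
    and Z1: "approx_eigenseq T c1 Z1" and Z2: "approx_eigenseq T c2 Z2"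
  shows "(\<lambda>k. l2_inner (Z1 k) (Z1 k)) \<longlonglongrightarrow> 1" "(\<lambda>k. l2_inner (Z2 k) (Z2 k)) \<longlonglongrightarrow> 1"
    and "(\<lambda>k. l2_inner (Z1 k) (Z2 k)) \<longlonglongrightarrow> 0" "(\<lambda>k. l2_inner (Z2 k) (Z1 k)) \<longlonglongrightarrow> 0"
    and "(\<lambda>k. l2_inner (T (Z1 k)) (Z1 k)) \<longlonglongrightarrow> of_real c1" "(\<lambda>k. l2_inner (T (Z2 k)) (Z2 k)) \<longlonglongrightarrow> of_real c2"
    and "(\<lambda>k. l2_inner (T (Z1 k)) (Z2 k)) \<longlonglongrightarrow> 0" "(\<lambda>k. l2_inner (T (Z2 k)) (Z1 k)) \<longlonglongrightarrow> 0"
proof -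
  have B: "bounded_op T"
    using T by (rule self_adjoint_bounded_op)
  have l2: "Z1 k \<in> l2" "Z2 k \<in> l2" for k
    using Z1 Z2 by (simp_all add: approx_eigenseq_l2)
  have n1: "(\<lambda>k. l2_norm (Z1 k)) \<longlonglongrightarrow> 1" and n2: "(\<lambda>k. l2_norm (Z2 k)) \<longlonglongrightarrow> 1"
    using Z1 Z2 by (simp_all add: approx_eigenseq_def)
  show g11: "(\<lambda>k. l2_inner (Z1 k) (Z1 k)) \<longlonglongrightarrow> 1" and g22: "(\<lambda>k. l2_inner (Z2 k) (Z2 k)) \<longlonglongrightarrow> 1"
    using Z1 Z2 by (simp_all add: approx_eigenseq_inner_self)
  show g12: "(\<lambda>k. l2_inner (Z1 k) (Z2 k)) \<longlonglongrightarrow> 0"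
    by (rule approx_eigenseq_orthogonal[OF T \<open>c1 \<noteq> c2\<close> Z1 Z2])
  then show g21: "(\<lambda>k. l2_inner (Z2 k) (Z1 k)) \<longlonglongrightarrow> 0"
    using tendsto_cnj[OF g12] l2 by (simp add: l2_inner_commute[of "Z1 _" "Z2 _"])
  show "(\<lambda>k. l2_inner (T (Z1 k)) (Z1 k)) \<longlonglongrightarrow> of_real c1"
    using approx_eigenseq_inner_apply[OF B Z1 l2(1) n1 g11] by simp
  show "(\<lambda>k. l2_inner (T (Z2 k)) (Z2 k)) \<longlonglongrightarrow> of_real c2"
    using approx_eigenseq_inner_apply[OF B Z2 l2(2) n2 g22] by simp
  show "(\<lambda>k. l2_inner (T (Z1 k)) (Z2 k)) \<longlonglongrightarrow> 0"
    using approx_eigenseq_inner_apply[OF B Z1 l2(2) n2 g12] by simp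
  show "(\<lambda>k. l2_inner (T (Z2 k)) (Z1 k)) \<longlonglongrightarrow> 0"
    using approx_eigenseq_inner_apply[OF B Z2 l2(1) n1 g21] by simp
qed

lemma approx_eigenseq_pair_limits:
  assumes T: "self_adjoint T" and "c1 \<noteq> c2"
    and Z1: "approx_eigenseq T c1 Z1" and Z2: "approx_eigenseq T c2 Z2"
  defines "U \<equiv> \<lambda>k n. Z1 k n + Z2 k n" and "Y \<equiv> \<lambda>k n. Z2 k n - Z1 k n"
  shows "(\<lambda>k. l2_norm (U k)) \<longlonglongrightarrow> sqrt 2" and "(\<lambda>k. l2_norm (Y k)) \<longlonglongrightarrow> sqrt 2"
    and "(\<lambda>k. l2_inner (T (U k)) (Y k)) \<longlonglongrightarrow> of_real (c2 - c1)"
    and "(\<lambda>k. l2_inner (T (U k)) (U k)) \<longlonglongrightarrow> of_real (c1 + c2)"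
    and "(\<lambda>k. l2_inner (U k) (Y k)) \<longlonglongrightarrow> 0"
proof -
  note gram = approx_eigenseq_gram_limits[OF T \<open>c1 \<noteq> c2\<close> Z1 Z2]
  have B: "bounded_op T"
    using T by (rule self_adjoint_bounded_op)
  have l2: "Z1 k \<in> l2" "Z2 k \<in> l2" "T (Z1 k) \<in> l2" "T (Z2 k) \<in> l2" for k
    using Z1 Z2 B by (simp_all add: approx_eigenseq_l2 bounded_op_l2)
  have U: "U k \<in> l2" and Y: "Y k \<in> l2" for k
    using l2 by (simp_all add: U_def Y_def)
  have TU: "T (\<lambda>n. Z1 k n + Z2 k n) = (\<lambda>n. T (Z1 k) n + T (Z2 k) n)" for k
    using l2 by (simp add: bounded_op_add[OF B])
  note expand = U_def Y_def TU l2 l2_inner_add_left l2_inner_add_right l2_inner_diff_left l2_inner_diff_right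
  have "(\<lambda>k. l2_inner (U k) (U k)) \<longlonglongrightarrow> of_real 2"
    using tendsto_add[OF tendsto_add[OF gram(1,3)] tendsto_add[OF gram(4,2)]] by (simp add: expand algebra_simps)
  then show "(\<lambda>k. l2_norm (U k)) \<longlonglongrightarrow> sqrt 2"
    by (rule tendsto_l2_norm_of_inner_self[OF U])
  have "(\<lambda>k. l2_inner (Y k) (Y k)) \<longlonglongrightarrow> of_real 2"
    using tendsto_diff[OF tendsto_diff[OF gram(2,4)] tendsto_diff[OF gram(3,1)]] by (simp add: expand algebra_simps)
  then show "(\<lambda>k. l2_norm (Y k)) \<longlonglongrightarrow> sqrt 2"
    by (rule tendsto_l2_norm_of_inner_self[OF Y])
  show "(\<lambda>k. l2_inner (T (U k)) (Y k)) \<longlonglongrightarrow> of_real (c2 - c1)"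
    using tendsto_add[OF tendsto_diff[OF gram(7,5)] tendsto_diff[OF gram(6,8)]] by (simp add: expand algebra_simps)
  show "(\<lambda>k. l2_inner (T (U k)) (U k)) \<longlonglongrightarrow> of_real (c1 + c2)"
    using tendsto_add[OF tendsto_add[OF gram(5,7)] tendsto_add[OF gram(8,6)]] by (simp add: expand algebra_simps)
  show "(\<lambda>k. l2_inner (U k) (Y k)) \<longlonglongrightarrow> 0"
    using tendsto_add[OF tendsto_diff[OF gram(3,1)] tendsto_diff[OF gram(2,4)]] by (simp add: expand algebra_simps)
qed

(* For a unit vector u and y in the range of P_F = span_proj e F, this is |<[P_F T P_F, P] u, y>| / |y|
   where P is the projection onto u. *)
definition commutator_lower_bound :: "op \<Rightarrow> seq \<Rightarrow> seq \<Rightarrow> real" where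
  "commutator_lower_bound T u y = cmod (l2_inner (T u) y - l2_inner (T u) u * l2_inner u y) / l2_norm y"

lemma commutator_lower_bound_l2_normalize:
  assumes "bounded_op T" "x \<in> l2" "y \<in> l2"
  defines "s \<equiv> 1 / l2_norm x"
  shows "commutator_lower_bound T (l2_normalize x) y
    = cmod (of_real s * (l2_inner (T x) y - (of_real s)\<^sup>2 * l2_inner (T x) x * l2_inner x y)) / l2_norm y"
  using assms unfolding commutator_lower_bound_def l2_normalize_def s_def[symmetric]
  by (simp add: bounded_op_scale bounded_op_l2 l2_inner_scale_left l2_inner_scale_right
      power2_eq_square algebra_simps)

lemma approx_eigenseq_commutator_limit:
  assumes T: "self_adjoint T" and "c1 < c2"
    and Z1: "approx_eigenseq T c1 Z1" and Z2: "approx_eigenseq T c2 Z2"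
  defines "U \<equiv> \<lambda>k n. Z1 k n + Z2 k n" and "Y \<equiv> \<lambda>k n. Z2 k n - Z1 k n"
  shows "(\<lambda>k. l2_norm (U k)) \<longlonglongrightarrow> sqrt 2"
    and "(\<lambda>k. commutator_lower_bound T (l2_normalize (U k)) (Y k)) \<longlonglongrightarrow> (c2 - c1) / 2"
proof -
  have "c1 \<noteq> c2"
    using \<open>c1 < c2\<close> by simp
  note limits = approx_eigenseq_pair_limits[OF T this Z1 Z2]
  then show "(\<lambda>k. l2_norm (U k)) \<longlonglongrightarrow> sqrt 2"
    by (simp add: U_def)
  have "bounded_op T"
    using T by (rule self_adjoint_bounded_op)
  moreover have "U k \<in> l2" "Y k \<in> l2" for k
    using Z1 Z2 by (simp_all add: U_def Y_def approx_eigenseq_l2)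
  ultimately have eq: "commutator_lower_bound T (l2_normalize (U k)) (Y k)
      = cmod (of_real (1 / l2_norm (U k)) * (l2_inner (T (U k)) (Y k)
          - (of_real (1 / l2_norm (U k)))\<^sup>2 * l2_inner (T (U k)) (U k) * l2_inner (U k) (Y k))) / l2_norm (Y k)"
    for k by (rule commutator_lower_bound_l2_normalize)
  have "(\<lambda>k. commutator_lower_bound T (l2_normalize (U k)) (Y k))
      \<longlonglongrightarrow> cmod (of_real (1 / sqrt 2) * (of_real (c2 - c1) - (of_real (1 / sqrt 2))\<^sup>2 * of_real (c1 + c2) * 0))
        / sqrt 2"
    unfolding eq by (intro tendsto_intros) (use limits in \<open>simp_all add: U_def Y_def\<close>)
  also have "cmod (of_real (1 / sqrt 2) * (of_real (c2 - c1) - (of_real (1 / sqrt 2))\<^sup>2 * of_real (c1 + c2) * 0))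
        / sqrt 2 = \<bar>(c2 - c1) / sqrt 2\<bar> / sqrt 2"
    by (simp del: of_real_diff add: of_real_diff[symmetric] norm_divide)
  also have "\<dots> = (c2 - c1) / 2"
    using \<open>c1 < c2\<close> by (simp add: divide_divide_eq_left)
  finally show "(\<lambda>k. commutator_lower_bound T (l2_normalize (U k)) (Y k)) \<longlonglongrightarrow> (c2 - c1) / 2" .
qed

section \<open>Orthonormal bases and finite sections\<close>

context
  fixes e :: "nat \<Rightarrow> seq"
  assumes basis: "orthonormal_basis e"
begin

lemma basis_l2 [simp]: "e n \<in> l2"
  using basis by (simp add: orthonormal_basis_def)

lemma basis_inner: "l2_inner (e n) (e m) = (if n = m then 1 else 0)"
  using basis by (simp add: orthonormal_basis_def)

lemma basis_complete: "x \<in> l2 \<Longrightarrow> (\<And>n. l2_inner x (e n) = 0) \<Longrightarrow> x = (\<lambda>n. 0)"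
  using basis by (simp add: orthonormal_basis_def)

lemma basis_norm: "l2_norm (e n) = 1"
proof -
  have "(l2_norm (e n))\<^sup>2 = 1"
    using l2_inner_self[of "e n"] basis_inner[of n n] by (metis of_real_eq_1_iff basis_l2)
  then show ?thesis
    using l2_norm_nonneg[OF basis_l2[of n]] by (simp add: power2_eq_1_iff)
qed

lemma span_proj_l2 [simp]: "span_proj e F x \<in> l2"
  unfolding span_proj_def by (intro l2_sum l2_scale basis_l2)

lemma span_proj_inner_left:
  assumes "y \<in> l2"
  shows "l2_inner (span_proj e F x) y = (\<Sum>n\<in>F. l2_inner x (e n) * l2_inner (e n) y)"
  unfolding span_proj_def using assms by (simp add: l2_inner_sum_left l2_inner_scale_left)

lemma span_proj_inner_basis:
  assumes "finite F"
  shows "l2_inner (span_proj e F x) (e m) = (if m \<in> F then l2_inner x (e m) else 0)"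
  using assms by (simp add: span_proj_inner_left basis_inner if_distrib[of "\<lambda>t. _ * t"] cong: if_cong)

lemma span_proj_self_adjoint:
  assumes "x \<in> l2" "y \<in> l2"
  shows "l2_inner (span_proj e F x) y = l2_inner x (span_proj e F y)"
  using assms
  by (simp add: l2_inner_commute[of "span_proj e F y" x] span_proj_inner_left l2_inner_commute[of "e _" y]
      l2_inner_commute[of "e _" x] mult.commute)

lemma span_proj_fixed_iff:
  assumes "finite F" "x \<in> l2"
  shows "span_proj e F x = x \<longleftrightarrow> (\<forall>n. n \<notin> F \<longrightarrow> l2_inner x (e n) = 0)"
proof
  assume "span_proj e F x = x"
  then show "\<forall>n. n \<notin> F \<longrightarrow> l2_inner x (e n) = 0"
    using span_proj_inner_basis[OF assms(1), of x] by metis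
next
  assume out: "\<forall>n. n \<notin> F \<longrightarrow> l2_inner x (e n) = 0"
  have "l2_inner (\<lambda>k. span_proj e F x k - x k) (e n) = 0" for n
    using assms out by (simp add: l2_inner_diff_left span_proj_inner_basis)
  then have "(\<lambda>k. span_proj e F x k - x k) = (\<lambda>k. 0)"
    using assms by (intro basis_complete) simp_all
  then show "span_proj e F x = x"
    by (simp add: fun_eq_iff)
qed

lemma span_proj_idem: "finite F \<Longrightarrow> span_proj e F (span_proj e F x) = span_proj e F x"
  by (simp add: span_proj_fixed_iff span_proj_inner_basis)

lemma span_proj_norm_power2:
  assumes "finite F"
  shows "(l2_norm (span_proj e F x))\<^sup>2 = (\<Sum>n\<in>F. (cmod (l2_inner x (e n)))\<^sup>2)"
proof -
  have "l2_inner (e n) (span_proj e F x) = cnj (l2_inner x (e n))" if "n \<in> F" for n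
    using l2_inner_commute[of "span_proj e F x" "e n"] span_proj_inner_basis[OF assms, of x n] that
    by simp
  then have "l2_inner (span_proj e F x) (span_proj e F x) = (\<Sum>n\<in>F. l2_inner x (e n) * cnj (l2_inner x (e n)))"
    by (simp add: span_proj_inner_left cong: sum.cong)
  also have "\<dots> = of_real (\<Sum>n\<in>F. (cmod (l2_inner x (e n)))\<^sup>2)"
    unfolding complex_norm_square[symmetric] by (simp del: of_real_power)
  finally have "complex_of_real ((l2_norm (span_proj e F x))\<^sup>2) = of_real (\<Sum>n\<in>F. (cmod (l2_inner x (e n)))\<^sup>2)"
    by (simp only: l2_inner_self[OF span_proj_l2])
  then show ?thesis
    by (simp only: of_real_eq_iff)
qed

lemma span_proj_norm_le:
  assumes "finite F" "x \<in> l2"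
  shows "l2_norm (span_proj e F x) \<le> l2_norm x"
proof -
  have "of_real ((l2_norm (span_proj e F x))\<^sup>2) = l2_inner x (span_proj e F x)"
    using l2_inner_self[of "span_proj e F x"] span_proj_self_adjoint[OF assms(2) span_proj_l2, of F F]
      span_proj_idem[OF assms(1)] by simp
  then have "(l2_norm (span_proj e F x))\<^sup>2 = cmod (l2_inner x (span_proj e F x))"
    by (metis abs_power2 norm_of_real)
  also have "\<dots> \<le> l2_norm x * l2_norm (span_proj e F x)"
    using assms by (simp add: l2_cauchy_schwarz)
  finally have "l2_norm (span_proj e F x) * l2_norm (span_proj e F x) \<le> l2_norm x * l2_norm (span_proj e F x)"
    by (simp add: power2_eq_square)
  then show ?thesis
    using l2_norm_nonneg[OF assms(2)] l2_norm_nonneg[OF span_proj_l2, of F x]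
    by (metis mult_right_le_imp_le order.not_eq_order_implies_strict mult_zero_right)
qed

lemma span_proj_fixed_mono:
  assumes "finite G" "F \<subseteq> G" "x \<in> l2" "span_proj e F x = x"
  shows "span_proj e G x = x"
  using assms span_proj_fixed_iff finite_subset[OF assms(2,1)] by blast

lemma bounded_op_span_proj:
  assumes "finite F"
  shows "bounded_op (span_proj e F)"
proof (rule bounded_opI[where K = 1])
  fix x assume "x \<in> l2"
  then show "l2_norm (span_proj e F x) \<le> 1 * l2_norm x"
    using span_proj_norm_le[OF assms] by simp
next
  fix a x y assume "x \<in> l2" "y \<in> l2"
  then show "span_proj e F (\<lambda>n. a * x n + y n) = (\<lambda>n. a * span_proj e F x n + span_proj e F y n)"
    by (simp add: span_proj_def l2_inner_add_left l2_inner_scale_left sum.distrib sum_distrib_left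
        fun_eq_iff algebra_simps)
qed simp

lemma bessel_summable:
  assumes "x \<in> l2"
  shows "summable (\<lambda>n. (cmod (l2_inner x (e n)))\<^sup>2)"
proof (rule summableI_nonneg_bounded)
  show "(\<Sum>n<N. (cmod (l2_inner x (e n)))\<^sup>2) \<le> (l2_norm x)\<^sup>2" for N
    using span_proj_norm_le[of "{..<N}" x] assms l2_norm_nonneg[OF span_proj_l2, of "{..<N}" x]
    by (simp flip: span_proj_norm_power2 add: power_mono)
qed simp

lemma span_proj_Cauchy:
  assumes "x \<in> l2" "\<epsilon> > 0"
  shows "\<exists>N. \<forall>m\<ge>N. \<forall>k\<ge>m. l2_norm (\<lambda>n. span_proj e {..<k} x n - span_proj e {..<m} x n) < \<epsilon>"
proof -
  obtain N where N: "\<forall>m\<ge>N. \<forall>k. norm (\<Sum>i\<in>{m..<k}. (cmod (l2_inner x (e i)))\<^sup>2) < \<epsilon>\<^sup>2"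
    using bessel_summable[OF assms(1)] \<open>\<epsilon> > 0\<close> unfolding summable_Cauchy by (meson zero_less_power)
  have "l2_norm (\<lambda>n. span_proj e {..<k} x n - span_proj e {..<m} x n) < \<epsilon>" if "m \<ge> N" "k \<ge> m" for m k
  proof (rule power2_less_imp_less)
    have "span_proj e {..<k} x n - span_proj e {..<m} x n = span_proj e {m..<k} x n" for n
      using that sum_diff_nat_ivl[of 0 m k "\<lambda>i. l2_inner x (e i) * e i n"]
      by (simp add: span_proj_def atLeast0LessThan)
    then show "(l2_norm (\<lambda>n. span_proj e {..<k} x n - span_proj e {..<m} x n))\<^sup>2 < \<epsilon>\<^sup>2"
      using N that by (simp add: span_proj_norm_power2 sum_nonneg)
  qed (use \<open>\<epsilon> > 0\<close> in simp)
  then show ?thesis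
    by blast
qed

lemma span_proj_tendsto:
  assumes x: "x \<in> l2"
  shows "(\<lambda>N. l2_norm (\<lambda>k. span_proj e {..<N} x k - x k)) \<longlonglongrightarrow> 0"
proof -
  define Q where "Q N = span_proj e {..<N} x" for N
  obtain y where y: "y \<in> l2" and lim: "(\<lambda>N. l2_norm (\<lambda>n. Q N n - y n)) \<longlonglongrightarrow> 0"
    using l2_complete[of Q, OF span_proj_l2[of "{..<_}" x, folded Q_def] span_proj_Cauchy[OF x, folded Q_def]]
    by blast
  have "l2_inner (\<lambda>n. x n - y n) (e m) = 0" for m
  proof -
    have "cmod (l2_inner (\<lambda>n. x n - y n) (e m)) \<le> l2_norm (\<lambda>n. Q N n - y n)" if "N > m" for N
    proof -
      have "l2_inner (\<lambda>n. x n - y n) (e m) = l2_inner (\<lambda>n. Q N n - y n) (e m)"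
        using that x y by (simp add: Q_def l2_inner_diff_left span_proj_inner_basis)
      also have "cmod \<dots> \<le> l2_norm (\<lambda>n. Q N n - y n)"
        using l2_cauchy_schwarz[of "\<lambda>n. Q N n - y n" "e m"] y by (simp add: Q_def basis_norm)
      finally show ?thesis .
    qed
    then have "cmod (l2_inner (\<lambda>n. x n - y n) (e m)) \<le> 0"
      by (intro LIMSEQ_le_const[OF lim]) (auto intro: exI[of _ "Suc m"])
    then show ?thesis
      by simp
  qed
  then have "(\<lambda>n. x n - y n) = (\<lambda>n. 0)"
    using x y by (intro basis_complete) simp_all
  then have "y = x"
    by (simp add: fun_eq_iff)
  with lim show ?thesis
    by (simp add: Q_def)
qed

lemma approx_eigenseq_finite_support:
  assumes T: "self_adjoint T" and c: "complex_of_real c \<in> op_spectrum T"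
  obtains Z N where "approx_eigenseq T c Z" and "\<And>k. span_proj e {..<N k} (Z k) = Z k"
proof -
  obtain X where X: "approx_eigenseq T c X"
    using spectrum_approx_eigenseq[OF T c] .
  have "\<exists>N. l2_norm (\<lambda>n. span_proj e {..<N} (X k) n - X k n) < inverse (real (Suc k))" for k
    using order_tendstoD(2)[OF span_proj_tendsto, of "X k" "inverse (real (Suc k))"] X
    by (auto simp: approx_eigenseq_def eventually_sequentially)
  then obtain N where N: "\<And>k. l2_norm (\<lambda>n. span_proj e {..<N k} (X k) n - X k n) < inverse (real (Suc k))"
    by metis
  define Z where "Z k = span_proj e {..<N k} (X k)" for k
  have "(\<lambda>k. l2_norm (\<lambda>n. Z k n - X k n)) \<longlonglongrightarrow> 0"
    by (rule Lim_null_comparison[OF always_eventually LIMSEQ_inverse_real_of_nat])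
      (use N[THEN less_imp_le] X in \<open>simp add: Z_def approx_eigenseq_def\<close>)
  moreover have "bounded_op T"
    using T by (rule self_adjoint_bounded_op)
  ultimately have "approx_eigenseq T c Z"
    using approx_eigenseq_perturb[OF _ X] by (simp add: Z_def)
  moreover have "span_proj e {..<N k} (Z k) = Z k" for k
    by (simp add: Z_def span_proj_idem)
  ultimately show ?thesis
    using that by blast
qed

lemma rank_one_proj_support:
  assumes "finite F" and u: "u \<in> l2" "span_proj e F u = u"
    and "l2_inner (rank_one_proj u (e n)) (e m) \<noteq> 0"
  shows "n \<in> F \<and> m \<in> F"
proof -
  have "l2_inner (rank_one_proj u (e n)) (e m) = cnj (l2_inner u (e n)) * l2_inner u (e m)"
    using u by (simp add: rank_one_proj_def l2_inner_scale_left l2_inner_commute[of u "e n"])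
  then show ?thesis
    using assms span_proj_fixed_iff[OF \<open>finite F\<close> u(1)] by auto
qed

lemma commutator_compression_lower_bound:
  assumes "finite F" and T: "bounded_op T"
    and u: "u \<in> l2" "l2_norm u = 1" "span_proj e F u = u"
    and y: "y \<in> l2" "span_proj e F y = y"
  shows "commutator_lower_bound T u y
     \<le> op_norm (commutator (span_proj e F \<circ> T \<circ> span_proj e F) (rank_one_proj u))"
proof -
  define P where "P = span_proj e F"
  define C where "C = commutator (P \<circ> T \<circ> P) (rank_one_proj u)"
  have P: "bounded_op P"
    unfolding P_def using \<open>finite F\<close> by (rule bounded_op_span_proj)
  have C: "bounded_op C"
    unfolding C_def o_def
    by (rule bounded_op_commutator[OF bounded_op_comp[OF P bounded_op_comp[OF T P]] bounded_op_rank_one_proj[OF u(1,2)]])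
  have Tu: "T u \<in> l2"
    using T u by (simp add: bounded_op_l2)
  have "C u = (\<lambda>n. P (T u) n - l2_inner (P (T u)) u * u n)"
    using u by (simp add: C_def P_def commutator_def rank_one_proj_def l2_inner_self)
  then have "l2_inner (C u) y = l2_inner (T u) y - l2_inner (T u) u * l2_inner u y"
    using u y Tu
    by (simp add: P_def l2_inner_diff_left l2_inner_scale_left span_proj_self_adjoint)
  then have "cmod (l2_inner (T u) y - l2_inner (T u) u * l2_inner u y) \<le> l2_norm (C u) * l2_norm y"
    using l2_cauchy_schwarz[OF bounded_op_l2[OF C u(1)] y(1)] by simp
  also have "\<dots> \<le> op_norm C * l2_norm y"
    using l2_norm_le_op_norm[OF C u(1)] u(2) y(1) by (simp add: mult_right_mono)
  finally have "cmod (l2_inner (T u) y - l2_inner (T u) u * l2_inner u y) \<le> op_norm C * l2_norm y" .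
  moreover have "0 \<le> op_norm C"
    using order_trans[OF l2_norm_nonneg[OF bounded_op_l2[OF C u(1)]] l2_norm_le_op_norm[OF C u(1)]] u(2)
    by simp
  ultimately show ?thesis
    using l2_norm_nonneg[OF y(1)] unfolding C_def P_def commutator_lower_bound_def
    by (cases "l2_norm y = 0") (simp_all add: pos_divide_le_eq)
qed

lemma finite_section_commutator_witness:
  assumes T: "self_adjoint T" and "c1 < c2"
    and c1: "complex_of_real c1 \<in> op_spectrum T" and c2: "complex_of_real c2 \<in> op_spectrum T"
    and "r < (c2 - c1) / 2"
  obtains F u y where "finite F" and "u \<in> l2" "l2_norm u = 1" "span_proj e F u = u"
    and "y \<in> l2" "span_proj e F y = y" and "r < commutator_lower_bound T u y"
proof -
  obtain Z1 N1 where Z1: "approx_eigenseq T c1 Z1" "\<And>k. span_proj e {..<N1 k} (Z1 k) = Z1 k"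
    using approx_eigenseq_finite_support[OF T c1] by metis
  obtain Z2 N2 where Z2: "approx_eigenseq T c2 Z2" "\<And>k. span_proj e {..<N2 k} (Z2 k) = Z2 k"
    using approx_eigenseq_finite_support[OF T c2] by metis
  define U where "U k = (\<lambda>n. Z1 k n + Z2 k n)" for k
  define Y where "Y k = (\<lambda>n. Z2 k n - Z1 k n)" for k
  note limits = approx_eigenseq_commutator_limit[OF T \<open>c1 < c2\<close> Z1(1) Z2(1), folded U_def Y_def]
  have "\<forall>\<^sub>F k in sequentially. r < commutator_lower_bound T (l2_normalize (U k)) (Y k) \<and> 0 < l2_norm (U k)"
    using \<open>r < (c2 - c1) / 2\<close>
    by (intro eventually_conj order_tendstoD(1)[OF limits(2)] order_tendstoD(1)[OF limits(1)]) simp_all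
  then obtain k where k: "r < commutator_lower_bound T (l2_normalize (U k)) (Y k)" and "0 < l2_norm (U k)"
    using eventually_sequentially by auto
  define F where "F = {..<max (N1 k) (N2 k)}"
  have "finite F" and P: "bounded_op (span_proj e F)"
    using bounded_op_span_proj by (simp_all add: F_def)
  have "span_proj e F (Z1 k) = Z1 k" "span_proj e F (Z2 k) = Z2 k"
    by (rule span_proj_fixed_mono[OF \<open>finite F\<close> _ approx_eigenseq_l2 Z1(2)] Z1(1)
        span_proj_fixed_mono[OF \<open>finite F\<close> _ approx_eigenseq_l2 Z2(2)] Z2(1) | simp add: F_def)+
  then have fixed: "span_proj e F (U k) = U k" "span_proj e F (Y k) = Y k"
    using Z1 Z2 by (simp_all add: U_def Y_def approx_eigenseq_l2 bounded_op_add[OF P] bounded_op_diff[OF P])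
  have U: "U k \<in> l2" and Y: "Y k \<in> l2"
    using Z1 Z2 by (simp_all add: U_def Y_def approx_eigenseq_l2)
  show ?thesis
  proof (rule that)
    show "span_proj e F (l2_normalize (U k)) = l2_normalize (U k)"
      by (rule bounded_op_fixed_l2_normalize[OF P U fixed(1)])
    show "l2_norm (l2_normalize (U k)) = 1"
      using U \<open>0 < l2_norm (U k)\<close> by (simp add: l2_norm_l2_normalize)
  qed (use \<open>finite F\<close> U Y fixed k in \<open>simp_all add: l2_normalize_l2\<close>)
qed

end

theorem lemma3p1:
  fixes T :: op and c1 c2 :: real and e :: "nat \<Rightarrow> seq"
  assumes "self_adjoint T"
    and "op_norm T = 1"
    and "c1 < c2"
    and "complex_of_real c1 \<in> op_spectrum T"
    and "complex_of_real c2 \<in> op_spectrum T"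
    and "orthonormal_basis e"
  shows "\<forall>\<epsilon>>0. \<exists>F P. finite F \<and> is_projection P \<and>
           op_norm (commutator (span_proj e F \<circ> T \<circ> span_proj e F) P) > (c2 - c1) / 2 - \<epsilon> \<and>
           (\<forall>n m. l2_inner (P (e n)) (e m) \<noteq> 0 \<longrightarrow> n \<in> F \<and> m \<in> F)"
proof (intro allI impI)
  fix \<epsilon> :: real assume "\<epsilon> > 0"
  note basis = assms(6)
  have "(c2 - c1) / 2 - \<epsilon> < (c2 - c1) / 2"
    using \<open>\<epsilon> > 0\<close> by linarith
  then obtain F u y where F: "finite F" and u: "u \<in> l2" "l2_norm u = 1" "span_proj e F u = u"
    and y: "y \<in> l2" "span_proj e F y = y" and bound: "(c2 - c1) / 2 - \<epsilon> < commutator_lower_bound T u y"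
    using finite_section_commutator_witness[OF basis assms(1,3,4,5)] by metis
  have "bounded_op T"
    using assms(1) by (rule self_adjoint_bounded_op)
  from commutator_compression_lower_bound[OF basis F this u y] bound
  have "(c2 - c1) / 2 - \<epsilon> < op_norm (commutator (span_proj e F \<circ> T \<circ> span_proj e F) (rank_one_proj u))"
    by simp
  with F rank_one_proj_is_projection[OF u(1,2)] rank_one_proj_support[OF basis F u(1,3)]
  show "\<exists>F P. finite F \<and> is_projection P \<and>
           op_norm (commutator (span_proj e F \<circ> T \<circ> span_proj e F) P) > (c2 - c1) / 2 - \<epsilon> \<and>
           (\<forall>n m. l2_inner (P (e n)) (e m) \<noteq> 0 \<longrightarrow> n \<in> F \<and> m \<in> F)"
    by blast
qed

end
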